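(* Let $\theta=[\mathrm{vec}(A)^T,\mu^T]^T,\ \theta_0=[\mathrm{vec}(A_0)^T,\mu_0^T]^T\in\mathscr{D}(p,r)$ with $M=M(\mu)$ and $M_0=M(\mu_0)$ positive definite. If $$\|\Sigma(\theta)-\Sigma(\theta_0)\|_F\le\frac{(1-\|A_0\|_2^2)^2\lambda_r(M_0)}{4\sqrt2(1+\|A_0\|_2^2)^2},$$ then $$\|\theta-\theta_0\|_2\le\Big[1+\frac{16\sqrt2\{1+\lambda_1(M_0)\}(1+\|A_0\|_2^2)}{\lambda_r(M_0)(1-\|A_0\|_2^2)}\Big]\|\Sigma(\theta)-\Sigma(\theta_0)\|_F .$$
   Context: Fix integers $1\le r\le p$. For $A\in\mathbb{R}^{(p-r)\times r}$ write $\varphi=\mathrm{vec}(A)$, $X_\varphi=\begin{bmatrix}0_{r\times r}&-A^{T}\\ A&0\end{bmatrix}$, $I_{p\times r}=\begin{bmatrix}I_r\\0\end{bmatrix}$, and let $U(\varphi)=(I_p+X_\varphi)(I_p-X_\varphi)^{-1}I_{p\times r}$ be the Cayley parameterization. For a symmetric $r\times r$ matrix $M$, $\mathrm{vech}(M)$ stacks its on-and-below-diagonal entries column by column, and $M(\mu)$ is the symmetric matrix with $\mathrm{vech}(M(\mu))=\mu$. $\mathscr{D}(p,r)=\{\theta=[\mathrm{vec}(A)^T,\mu^T]^T:\|A\|_2<1,\ \mu\in\mathbb{R}^{r(r+1)/2}\}$ and $\Sigma(\theta)=U(\varphi)M(\mu)U(\varphi)^T$. $\lambda_1(M_0)\ge\dots\ge\lambda_r(M_0)>0$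 are the eigenvalues of the positive definite matrix $M_0$. *)

theory Defs
  imports Complex_Main "Jordan_Normal_Form.Matrix" "Jordan_Normal_Form.Char_Poly"
    "Jordan_Normal_Form.Gauss_Jordan_Elimination"
begin

definition vnorm :: "real vec \<Rightarrow> real" where
  "vnorm v = sqrt (\<Sum>i<dim_vec v. (v $ i)^2)"

definition lnorm :: "real list \<Rightarrow> real" where
  "lnorm xs = sqrt (\<Sum>i<length xs. (xs ! i)^2)"

definition frob :: "real mat \<Rightarrow> real" where
  "frob M = sqrt (\<Sum>i<dim_row M. \<Sum>j<dim_col M. (M $$ (i,j))^2)"

definition spec_norm :: "real mat \<Rightarrow> real" where
  "spec_norm A = Sup {vnorm (A *\<^sub>v x) | x. x \<in> carrier_vec (dim_col A) \<and> vnorm x = 1}"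

definition vecm :: "real mat \<Rightarrow> real list" where
  "vecm A = concat (map (\<lambda>j. map (\<lambda>i. A $$ (i,j)) [0..<dim_row A]) [0..<dim_col A])"

definition vech :: "real mat \<Rightarrow> real list" where
  "vech M = concat (map (\<lambda>j. map (\<lambda>i. M $$ (i,j)) [j..<dim_row M]) [0..<dim_col M])"

definition pos_def :: "nat \<Rightarrow> real mat \<Rightarrow> bool" where
  "pos_def n M \<longleftrightarrow> M \<in> carrier_mat n n \<and> transpose_mat M = M \<and>
     (\<forall>x \<in> carrier_vec n. x \<noteq> 0\<^sub>v n \<longrightarrow> scalar_prod x (M *\<^sub>v x) > 0)"

definition lambda_max :: "real mat \<Rightarrow> real" where
  "lambda_max M = Max {k. eigenvalue M k}"

definition lambda_min :: "real mat \<Rightarrow> real" where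
  "lambda_min M = Min {k. eigenvalue M k}"

(* X_phi for A of size (p-r) x r *)
definition Xmat :: "nat \<Rightarrow> nat \<Rightarrow> real mat \<Rightarrow> real mat" where
  "Xmat p r A = four_block_mat (0\<^sub>m r r) (- transpose_mat A) A (0\<^sub>m (p - r) (p - r))"

definition Ipr :: "nat \<Rightarrow> nat \<Rightarrow> real mat" where
  "Ipr p r = mat p r (\<lambda>(i,j). if i = j then 1 else 0)"

definition Ucay :: "nat \<Rightarrow> nat \<Rightarrow> real mat \<Rightarrow> real mat" where
  "Ucay p r A = (1\<^sub>m p + Xmat p r A) * the (mat_inverse (1\<^sub>m p - Xmat p r A)) * Ipr p r"

definition Sigma :: "nat \<Rightarrow> nat \<Rightarrow> real mat \<Rightarrow> real mat \<Rightarrow> real mat" where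
  "Sigma p r A M = Ucay p r A * M * transpose_mat (Ucay p r A)"

end

theory Submission
  imports Defs "HOL-Analysis.L2_Norm"
begin

(*
  Write U and U0 for the Cayley frames of A and A0.  Both are isometries whose top r x r blocks
  T and T0 are symmetric, T positive semidefinite and T0 >= c0 = (1 - a0^2)/(1 + a0^2) with
  a0 = |A0|_2.  The residual E = U0 - U U^T U0 satisfies E M0 = -(1 - U U^T)(Sigma - Sigma0) U0,
  hence lambda_r(M0) |E| <= |Sigma - Sigma0| in Frobenius norm.  The deviation K = U^T U0 - 1
  solves the Sylvester equation T K + K T0 = (terms built from E), so c0 |K| <= 2 |E|, and
  U - U0 = (U - U0 Q^T) + U0 K^T, Q = U^T U0, with |U - U0 Q^T| = |E| bounds |U - U0|.  Finally M = U^T Sigma U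
  and A = (bottom block of U)(1 + T)^(-1) depend Lipschitz-continuously on (Sigma, U):
  |M - M0| <= |Sigma - Sigma0| + 2 lambda_1(M0) |U - U0| and |A - A0| <= 2 |U - U0|.
*)

declare col_mult[simp del]
declare minus_carrier_mat[simp]

section \<open>Euclidean norm and scalar products\<close>

lemma abs_sum_mult_le: "\<bar>\<Sum>i\<in>A. (f i::real) * g i\<bar> \<le> sqrt (\<Sum>i\<in>A. (f i)^2) * sqrt (\<Sum>i\<in>A. (g i)^2)"
proof -
  have "\<bar>\<Sum>i\<in>A. f i * g i\<bar> \<le> (\<Sum>i\<in>A. \<bar>f i\<bar> * \<bar>g i\<bar>)"
    by (metis (no_types, lifting) abs_mult sum.cong sum_abs)
  also have "\<dots> \<le> L2_set f A * L2_set g A" by (rule L2_set_mult_ineq)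
  finally show ?thesis unfolding L2_set_def .
qed

lemma vnorm_eq_sqrt_scalar_prod: "vnorm (v::real vec) = sqrt (v \<bullet> v)"
  unfolding vnorm_def scalar_prod_def by (simp add: power2_eq_square atLeast0LessThan)

lemma vnorm_nonneg[simp]: "vnorm v \<ge> 0" unfolding vnorm_def by (simp add: sum_nonneg)

lemma scalar_prod_self_nonneg: "(v::real vec) \<bullet> v \<ge> 0" unfolding scalar_prod_def by (auto intro: sum_nonneg)

lemma vnorm_square: "(vnorm v)^2 = (v::real vec) \<bullet> v"
  unfolding vnorm_eq_sqrt_scalar_prod using scalar_prod_self_nonneg by simp

lemma abs_scalar_prod_le_vnorm: assumes "v \<in> carrier_vec n" "w \<in> carrier_vec n"
  shows "\<bar>(v::real vec) \<bullet> w\<bar> \<le> vnorm v * vnorm w"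
proof -
  have "\<bar>v \<bullet> w\<bar> = \<bar>\<Sum>i\<in>{..<n}. v$i * w$i\<bar>" using assms
    unfolding scalar_prod_def by (simp add: atLeast0LessThan)
  also have "\<dots> \<le> sqrt (\<Sum>i\<in>{..<n}. (v$i)^2) * sqrt (\<Sum>i\<in>{..<n}. (w$i)^2)" by (rule abs_sum_mult_le)
  also have "\<dots> = vnorm v * vnorm w" using assms unfolding vnorm_def by (simp add: sum_nonneg)
  finally show ?thesis .
qed

lemma scalar_prod_le_vnorm: assumes "v \<in> carrier_vec n" "w \<in> carrier_vec n"
  shows "(v::real vec) \<bullet> w \<le> vnorm v * vnorm w"
  using abs_scalar_prod_le_vnorm[OF assms] by simp

lemma vnorm_eq_0_iff: assumes "v \<in> carrier_vec n" shows "vnorm (v::real vec) = 0 \<longleftrightarrow> v = 0\<^sub>v n"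
proof
  assume "vnorm v = 0"
  hence "(\<Sum>i<dim_vec v. (v $ i)^2) = 0" unfolding vnorm_def by (simp add: sum_nonneg)
  hence "\<forall>i\<in>{..<dim_vec v}. (v$i)^2 = 0" by (subst sum_nonneg_eq_0_iff[symmetric]) auto
  thus "v = 0\<^sub>v n" using assms by (intro eq_vecI) auto
qed (simp add: vnorm_def)

lemma vnorm_smult: "vnorm (c \<cdot>\<^sub>v (v::real vec)) = \<bar>c\<bar> * vnorm v"
proof -
  have "vnorm (c \<cdot>\<^sub>v v) = sqrt (c^2 * (\<Sum>i<dim_vec v. (v $ i)^2))"
    unfolding vnorm_def by (simp add: sum_distrib_left power_mult_distrib)
  thus ?thesis unfolding vnorm_def by (simp add: real_sqrt_mult)
qed

lemma normalize_vec: assumes x: "x \<in> carrier_vec n" "x \<noteq> 0\<^sub>v n"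
  shows "(1 / vnorm x) \<cdot>\<^sub>v x \<in> carrier_vec n" "((1 / vnorm x) \<cdot>\<^sub>v x) \<bullet> ((1 / vnorm x) \<cdot>\<^sub>v x) = 1"
    "vnorm x > 0"
proof -
  have p: "vnorm x > 0" using vnorm_eq_0_iff[OF x(1)] x(2) vnorm_nonneg[of x] by linarith
  thus "vnorm x > 0" .
  show "(1 / vnorm x) \<cdot>\<^sub>v x \<in> carrier_vec n" using x by simp
  have "((1 / vnorm x) \<cdot>\<^sub>v x) \<bullet> ((1 / vnorm x) \<cdot>\<^sub>v x) = (1/vnorm x)^2 * (x \<bullet> x)"
    using x by (simp add: power2_eq_square)
  also have "\<dots> = 1" using p unfolding vnorm_square[symmetric] by (simp add: field_simps)
  finally show "((1 / vnorm x) \<cdot>\<^sub>v x) \<bullet> ((1 / vnorm x) \<cdot>\<^sub>v x) = 1" .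
qed

lemma vnorm_add: assumes "x \<in> carrier_vec n" "y \<in> carrier_vec n"
  shows "vnorm (x + y) \<le> vnorm x + vnorm (y::real vec)"
proof -
  have "(vnorm (x + y))^2 = x \<bullet> x + 2 * (x \<bullet> y) + y \<bullet> y"
    unfolding vnorm_square using assms
    by (simp add: add_scalar_prod_distrib[of _ n] scalar_prod_add_distrib[of _ n] comm_scalar_prod[of y n x])
  also have "\<dots> \<le> (vnorm x)^2 + 2 * (vnorm x * vnorm y) + (vnorm y)^2"
    using scalar_prod_le_vnorm[OF assms] unfolding vnorm_square by simp
  also have "\<dots> = (vnorm x + vnorm y)^2" by (simp add: power2_eq_square algebra_simps)
  finally show ?thesis by (rule power2_le_imp_le) simp
qed

lemma scalar_prod_self_le_of_vnorm_le: assumes "vnorm x \<le> a * vnorm y" "a \<ge> 0"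
  shows "x \<bullet> x \<le> a^2 * ((y::real vec) \<bullet> y)"
proof -
  have "(vnorm x)^2 \<le> (a * vnorm y)^2" using assms by (intro power_mono) auto
  thus ?thesis unfolding vnorm_square[symmetric] by (simp add: power_mult_distrib)
qed

lemma scalar_prod_mult_mat_vec_transpose: assumes "W \<in> carrier_mat k n" "x \<in> carrier_vec n" "y \<in> carrier_vec k"
  shows "(W *\<^sub>v x) \<bullet> (y::real vec) = x \<bullet> (transpose_mat W *\<^sub>v y)"
proof -
  have "(transpose_mat W *\<^sub>v y) \<bullet> x = y \<bullet> (W *\<^sub>v x)" by (rule transpose_vec_mult_scalar[OF assms])
  moreover have "(W *\<^sub>v x) \<bullet> y = y \<bullet> (W *\<^sub>v x)" using assms by (intro comm_scalar_prod[of _ k]) auto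
  moreover have "x \<bullet> (transpose_mat W *\<^sub>v y) = (transpose_mat W *\<^sub>v y) \<bullet> x"
    using assms by (intro comm_scalar_prod[of _ n]) auto
  ultimately show ?thesis by simp
qed

lemma scalar_prod_skew_mult_eq_0: assumes X: "X \<in> carrier_mat n n" and sk: "transpose_mat X = - X"
  and v: "v \<in> carrier_vec n" shows "v \<bullet> (X *\<^sub>v v) = (0::real)"
proof -
  have "v \<bullet> (X *\<^sub>v v) = (transpose_mat X *\<^sub>v v) \<bullet> v"
    using transpose_vec_mult_scalar[OF X v v] by simp
  also have "\<dots> = - ((X *\<^sub>v v) \<bullet> v)" unfolding sk using X v by simp
  also have "(X *\<^sub>v v) \<bullet> v = v \<bullet> (X *\<^sub>v v)" using X v by (intro comm_scalar_prod[of _ n]) auto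
  finally show ?thesis by simp
qed

lemma smult_mat_mult_vec: assumes "M \<in> carrier_mat n m" "x \<in> carrier_vec m"
  shows "(c \<cdot>\<^sub>m M) *\<^sub>v x = c \<cdot>\<^sub>v (M *\<^sub>v (x::real vec))"
  using assms by (intro eq_vecI) auto

lemma discriminant_le_of_quadratic_nonneg: fixes a b c :: real
  assumes "\<And>t. a + 2 * t * b + t^2 * c \<ge> 0" "c \<ge> 0" "a \<ge> 0"
  shows "b^2 \<le> a * c"
proof (cases "c = 0")
  case True
  have "b = 0"
  proof (rule ccontr)
    assume b: "b \<noteq> 0"
    have "a + 2 * (- (a + 1) / (2 * b)) * b + (- (a + 1) / (2 * b))^2 * c \<ge> 0" by (rule assms(1))
    with b True show False by (simp add: field_simps)
  qed
  thus ?thesis using True by simp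
next
  case False
  hence c: "c > 0" using assms by simp
  have "a + 2 * (- b / c) * b + (- b / c)^2 * c \<ge> 0" by (rule assms(1))
  hence "a - b^2 / c \<ge> 0" using c by (simp add: field_simps power2_eq_square)
  thus ?thesis using c by (simp add: field_simps)
qed

lemma psd_cauchy_schwarz: assumes N: "N \<in> carrier_mat n n" and sym: "transpose_mat N = N"
  and psd: "\<And>x. x \<in> carrier_vec n \<Longrightarrow> (N *\<^sub>v x) \<bullet> x \<ge> (0::real)"
  and u: "u \<in> carrier_vec n" and v: "v \<in> carrier_vec n"
  shows "((N *\<^sub>v u) \<bullet> v)^2 \<le> ((N *\<^sub>v u) \<bullet> u) * ((N *\<^sub>v v) \<bullet> v)"
proof (rule discriminant_le_of_quadratic_nonneg)
  have symq: "(N *\<^sub>v v) \<bullet> u = (N *\<^sub>v u) \<bullet> v"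
    using scalar_prod_mult_mat_vec_transpose[OF N v u] sym comm_scalar_prod[of u n "N *\<^sub>v v"] comm_scalar_prod[of v n "N *\<^sub>v u"] N u v by simp
  fix t :: real
  have w: "u + t \<cdot>\<^sub>v v \<in> carrier_vec n" using u v by simp
  have "0 \<le> (N *\<^sub>v (u + t \<cdot>\<^sub>v v)) \<bullet> (u + t \<cdot>\<^sub>v v)" by (rule psd[OF w])
  also have "N *\<^sub>v (u + t \<cdot>\<^sub>v v) = N *\<^sub>v u + t \<cdot>\<^sub>v (N *\<^sub>v v)"
    using N u v by (simp add: mult_add_distrib_mat_vec[OF N] mult_mat_vec)
  also have "(N *\<^sub>v u + t \<cdot>\<^sub>v (N *\<^sub>v v)) \<bullet> (u + t \<cdot>\<^sub>v v)
     = (N *\<^sub>v u) \<bullet> u + t * ((N *\<^sub>v u) \<bullet> v) + t * ((N *\<^sub>v v) \<bullet> u) + t * t * ((N *\<^sub>v v) \<bullet> v)"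
    using N u v
    by (simp add: add_scalar_prod_distrib[of _ n] scalar_prod_add_distrib[of _ n] algebra_simps)
  finally show "0 \<le> (N *\<^sub>v u) \<bullet> u + 2 * t * ((N *\<^sub>v u) \<bullet> v) + t^2 * ((N *\<^sub>v v) \<bullet> v)"
    using symq by (simp add: power2_eq_square algebra_simps)
qed (use psd u v in auto)

section \<open>Matrix algebra under dimension side conditions\<close>

text \<open>The distributivity and associativity laws of the matrix library are stated with carrier
  premises whose inner dimension is not determined by the conclusion, which the simplifier cannot
  discharge; the versions below ask for equations between dimensions instead.\<close>

named_theorems mat_dim_simps

lemma mat_mult_assoc[mat_dim_simps]: "dim_col A = dim_row B \<Longrightarrow> dim_col B = dim_row C \<Longrightarrow> (A * B) * C = A * (B * (C::real mat))"
  by (metis assoc_mult_mat carrier_matI)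

lemma mat_add_mult_distrib[mat_dim_simps]: "dim_row A = dim_row B \<Longrightarrow> dim_col A = dim_col B \<Longrightarrow> dim_col A = dim_row C \<Longrightarrow>
  (A + B) * C = A * C + B * (C::real mat)"
  by (metis add_mult_distrib_mat carrier_matI)

lemma mat_mult_add_distrib[mat_dim_simps]: "dim_row B = dim_row C \<Longrightarrow> dim_col B = dim_col C \<Longrightarrow> dim_col A = dim_row B \<Longrightarrow>
  A * (B + C) = A * B + A * (C::real mat)"
  by (metis mult_add_distrib_mat carrier_matI)

lemma mat_minus_mult_distrib[mat_dim_simps]: "dim_row A = dim_row B \<Longrightarrow> dim_col A = dim_col B \<Longrightarrow> dim_col A = dim_row C \<Longrightarrow>
  (A - B) * C = A * C - B * (C::real mat)"
  by (metis minus_mult_distrib_mat carrier_matI)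

lemma mat_mult_minus_distrib[mat_dim_simps]: "dim_row B = dim_row C \<Longrightarrow> dim_col B = dim_col C \<Longrightarrow> dim_col A = dim_row B \<Longrightarrow>
  A * (B - C) = A * B - A * (C::real mat)"
  by (metis mult_minus_distrib_mat carrier_matI)

lemma mat_smult_mult_assoc[mat_dim_simps]: "dim_col A = dim_row B \<Longrightarrow> (k \<cdot>\<^sub>m A) * B = k \<cdot>\<^sub>m (A * (B::real mat))"
  by (metis mult_smult_assoc_mat carrier_matI)

lemma mat_mult_smult_assoc[mat_dim_simps]: "dim_col A = dim_row B \<Longrightarrow> A * (k \<cdot>\<^sub>m B) = k \<cdot>\<^sub>m (A * (B::real mat))"
  by (metis mult_smult_distrib carrier_matI)

lemma mat_smult_smult[mat_dim_simps]: "a \<cdot>\<^sub>m (b \<cdot>\<^sub>m M) = (a * b) \<cdot>\<^sub>m (M::real mat)"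
  by (intro eq_matI) auto

lemma mat_smult_minus_distrib[mat_dim_simps]: "dim_row X = dim_row Y \<Longrightarrow> dim_col X = dim_col Y \<Longrightarrow> a \<cdot>\<^sub>m (X - Y) = a \<cdot>\<^sub>m X - a \<cdot>\<^sub>m (Y::real mat)"
  by (intro eq_matI) (auto simp: algebra_simps)

lemma mat_smult_add_distrib[mat_dim_simps]: "dim_row X = dim_row Y \<Longrightarrow> dim_col X = dim_col Y \<Longrightarrow> a \<cdot>\<^sub>m (X + Y) = a \<cdot>\<^sub>m X + a \<cdot>\<^sub>m (Y::real mat)"
  by (intro eq_matI) (auto simp: algebra_simps)

lemma mat_transpose_mult[mat_dim_simps]: "dim_col A = dim_row B \<Longrightarrow> transpose_mat (A * B) = transpose_mat B * transpose_mat (A::real mat)"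
  by (metis transpose_mult carrier_matI)

lemma mat_transpose_add[mat_dim_simps]: "dim_row A = dim_row B \<Longrightarrow> dim_col A = dim_col B \<Longrightarrow> transpose_mat (A + B) = transpose_mat A + transpose_mat (B::real mat)"
  by (intro eq_matI) auto

lemma mat_transpose_minus[mat_dim_simps]: "dim_row A = dim_row B \<Longrightarrow> dim_col A = dim_col B \<Longrightarrow> transpose_mat (A - B) = transpose_mat A - transpose_mat (B::real mat)"
  by (intro eq_matI) auto

lemma mat_transpose_smult[mat_dim_simps]: "transpose_mat (k \<cdot>\<^sub>m A) = k \<cdot>\<^sub>m transpose_mat (A::real mat)"
  by (intro eq_matI) auto

lemma mat_transpose_uminus[mat_dim_simps]: "transpose_mat (- A) = - transpose_mat (A::real mat)"
  by (intro eq_matI) auto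

lemma mat_add_zero[mat_dim_simps]: "dim_row A = n \<Longrightarrow> dim_col A = m \<Longrightarrow> A + 0\<^sub>m n m = (A::real mat)"
  "dim_row A = n \<Longrightarrow> dim_col A = m \<Longrightarrow> 0\<^sub>m n m + A = (A::real mat)"
  "dim_row A = n \<Longrightarrow> dim_col A = m \<Longrightarrow> A - 0\<^sub>m n m = (A::real mat)"
  "dim_row A = n \<Longrightarrow> dim_col A = m \<Longrightarrow> 0\<^sub>m n m - A = - (A::real mat)"
  by (intro eq_matI; auto)+

lemma mat_add_uminus[mat_dim_simps]: "dim_row X = dim_row Y \<Longrightarrow> dim_col X = dim_col Y \<Longrightarrow> X + - Y = X - (Y::real mat)"
  by (intro eq_matI) auto

lemma mat_zero_mult[mat_dim_simps]: "dim_row A = n \<Longrightarrow> 0\<^sub>m k n * A = 0\<^sub>m k (dim_col (A::real mat))"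
  "dim_col A = n \<Longrightarrow> A * 0\<^sub>m n k = 0\<^sub>m (dim_row (A::real mat)) k"
  by (intro eq_matI; auto simp: scalar_prod_def)+

lemma mat_one_mult[mat_dim_simps]: "dim_row A = n \<Longrightarrow> 1\<^sub>m n * A = (A::real mat)"
  "dim_col A = n \<Longrightarrow> A * 1\<^sub>m n = (A::real mat)"
  by auto

section \<open>The Frobenius inner product\<close>

definition frob_inner :: "real mat \<Rightarrow> real mat \<Rightarrow> real" where
  "frob_inner X Y = (\<Sum>i<dim_row X. \<Sum>j<dim_col X. X $$ (i,j) * Y $$ (i,j))"

lemma frob_inner_self_nonneg: "frob_inner X X \<ge> 0"
  unfolding frob_inner_def by (simp add: sum_nonneg)

lemma frob_eq_sqrt_frob_inner: "frob X = sqrt (frob_inner X X)"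
  unfolding frob_def frob_inner_def by (simp add: power2_eq_square)

lemma frob_nonneg[simp]: "frob X \<ge> 0" unfolding frob_def by (simp add: sum_nonneg)

lemma frob_square: "(frob X)^2 = frob_inner X X"
  unfolding frob_eq_sqrt_frob_inner using frob_inner_self_nonneg by simp

lemma frob_inner_cols: assumes "X \<in> carrier_mat n m" "Y \<in> carrier_mat n m"
  shows "frob_inner X Y = (\<Sum>j<m. col X j \<bullet> col Y j)"
proof -
  have "frob_inner X Y = (\<Sum>i<n. \<Sum>j<m. X $$ (i,j) * Y $$ (i,j))" using assms unfolding frob_inner_def by simp
  also have "\<dots> = (\<Sum>j<m. \<Sum>i<n. X $$ (i,j) * Y $$ (i,j))" by (rule sum.swap)
  also have "\<dots> = (\<Sum>j<m. col X j \<bullet> col Y j)"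
    using assms by (intro sum.cong refl) (auto simp: scalar_prod_def atLeast0LessThan)
  finally show ?thesis .
qed

lemma frob_inner_commute: assumes "X \<in> carrier_mat n m" "Y \<in> carrier_mat n m"
  shows "frob_inner X Y = frob_inner Y X"
  using assms unfolding frob_inner_def by (simp add: mult.commute)

lemma frob_inner_transpose: assumes "X \<in> carrier_mat n m" "Y \<in> carrier_mat n m"
  shows "frob_inner (transpose_mat X) (transpose_mat Y) = frob_inner X Y"
proof -
  have "frob_inner (transpose_mat X) (transpose_mat Y) = (\<Sum>j<m. \<Sum>i<n. X $$ (i,j) * Y $$ (i,j))"
    using assms unfolding frob_inner_def by simp
  also have "\<dots> = frob_inner X Y" using assms unfolding frob_inner_def by (simp add: sum.swap[of _ "{..<m}"])
  finally show ?thesis .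
qed

lemma frob_transpose: assumes "X \<in> carrier_mat n m"
  shows "frob (transpose_mat X) = frob X"
  unfolding frob_eq_sqrt_frob_inner using frob_inner_transpose[OF assms assms] by simp

lemma frob_inner_le_frob: assumes "X \<in> carrier_mat n m" "Y \<in> carrier_mat n m"
  shows "frob_inner X Y \<le> frob X * frob Y"
proof -
  let ?S = "{..<n} \<times> {..<m}"
  have "frob_inner X Y = (\<Sum>ij\<in>?S. X $$ ij * Y $$ ij)"
    using assms unfolding frob_inner_def by (simp add: sum.cartesian_product)
  also have "\<dots> \<le> \<bar>\<Sum>ij\<in>?S. X $$ ij * Y $$ ij\<bar>" by simp
  also have "\<dots> \<le> sqrt (\<Sum>ij\<in>?S. (X $$ ij)^2) * sqrt (\<Sum>ij\<in>?S. (Y $$ ij)^2)" by (rule abs_sum_mult_le)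
  also have "\<dots> = frob X * frob Y" using assms unfolding frob_def by (simp add: sum.cartesian_product)
  finally show ?thesis .
qed

lemma frob_inner_add_left: assumes "X \<in> carrier_mat n m" "Y \<in> carrier_mat n m" "Z \<in> carrier_mat n m"
  shows "frob_inner (X + Y) Z = frob_inner X Z + frob_inner Y Z"
  using assms unfolding frob_inner_def by (simp add: sum.distrib[symmetric] algebra_simps)

lemma frob_inner_minus_left: assumes "X \<in> carrier_mat n m" "Y \<in> carrier_mat n m" "Z \<in> carrier_mat n m"
  shows "frob_inner (X - Y) Z = frob_inner X Z - frob_inner Y Z"
  using assms unfolding frob_inner_def by (simp add: sum_subtractf[symmetric] algebra_simps)

lemma frob_inner_add_right: assumes "X \<in> carrier_mat n m" "Y \<in> carrier_mat n m" "Z \<in> carrier_mat n m"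
  shows "frob_inner Z (X + Y) = frob_inner Z X + frob_inner Z Y"
  using assms unfolding frob_inner_def by (simp add: sum.distrib[symmetric] algebra_simps)

lemma frob_inner_minus_right: assumes "X \<in> carrier_mat n m" "Y \<in> carrier_mat n m" "Z \<in> carrier_mat n m"
  shows "frob_inner Z (X - Y) = frob_inner Z X - frob_inner Z Y"
  using assms unfolding frob_inner_def by (simp add: sum_subtractf[symmetric] algebra_simps)

lemma frob_inner_diff_self: assumes "X \<in> carrier_mat n m" "Y \<in> carrier_mat n m"
  shows "frob_inner (X - Y) (X - Y) = frob_inner X X - 2 * frob_inner X Y + frob_inner Y Y"
proof -
  have XY: "X - Y \<in> carrier_mat n m" using assms by simp
  show ?thesis
    unfolding frob_inner_minus_left[OF assms XY] frob_inner_minus_right[OF assms assms(1)] frob_inner_minus_right[OF assms assms(2)]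
      frob_inner_commute[OF assms(2,1)] by simp
qed

lemma frob_inner_one: "frob_inner (1\<^sub>m r) (1\<^sub>m r) = real r"
proof -
  have "frob_inner (1\<^sub>m r) (1\<^sub>m r) = (\<Sum>i<r. \<Sum>j<r. if i = j then 1 else 0)"
    unfolding frob_inner_def by (intro sum.cong) auto
  also have "\<dots> = (\<Sum>i<r. 1)" by (intro sum.cong) auto
  finally show ?thesis by simp
qed

lemma frob_add_le: assumes "X \<in> carrier_mat n m" "Y \<in> carrier_mat n m"
  shows "frob (X + Y) \<le> frob X + frob Y"
proof -
  have XY: "X + Y \<in> carrier_mat n m" using assms by simp
  have "(frob (X + Y))^2 = frob_inner X X + frob_inner X Y + (frob_inner Y X + frob_inner Y Y)"
    unfolding frob_square frob_inner_add_left[OF assms XY] frob_inner_add_right[OF assms assms(1)]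
      frob_inner_add_right[OF assms assms(2)] ..
  also have "\<dots> \<le> (frob X)^2 + 2 * (frob X * frob Y) + (frob Y)^2"
    using frob_inner_le_frob[OF assms] frob_inner_le_frob[OF assms(2,1)] unfolding frob_square by (simp add: mult.commute)
  also have "\<dots> = (frob X + frob Y)^2" by (simp add: power2_eq_square algebra_simps)
  finally show ?thesis by (rule power2_le_imp_le) simp
qed

lemma frob_uminus: assumes "X \<in> carrier_mat n m" shows "frob (- X) = frob X"
  using assms unfolding frob_def by simp

lemma frob_minus_le: assumes "X \<in> carrier_mat n m" "Y \<in> carrier_mat n m"
  shows "frob (X - Y) \<le> frob X + frob Y"
proof -
  have "X - Y = X + (- Y)" using assms by (simp add: minus_add_uminus_mat)
  thus ?thesis using frob_add_le[of X n m "-Y"] assms frob_uminus[OF assms(2)] by simp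
qed

lemma frob_inner_self_cols: assumes "X \<in> carrier_mat n m"
  shows "frob_inner X X = (\<Sum>j<m. (vnorm (col X j))^2)"
  unfolding frob_inner_cols[OF assms assms] vnorm_square ..

lemma frob_inner_mult_left: assumes "W \<in> carrier_mat k n" "X \<in> carrier_mat n m" "Y \<in> carrier_mat k m"
  shows "frob_inner (W * X) Y = frob_inner X (transpose_mat W * Y)"
proof -
  have "frob_inner (W * X) Y = (\<Sum>j<m. col (W * X) j \<bullet> col Y j)"
    using assms by (intro frob_inner_cols) auto
  also have "\<dots> = (\<Sum>j<m. col X j \<bullet> col (transpose_mat W * Y) j)"
    using assms by (intro sum.cong refl) (auto simp: scalar_prod_mult_mat_vec_transpose[OF assms(1)])
  also have "\<dots> = frob_inner X (transpose_mat W * Y)" using assms by (intro frob_inner_cols[symmetric]) auto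
  finally show ?thesis .
qed

lemma frob_mult_le: assumes "W \<in> carrier_mat k n" "Y \<in> carrier_mat n m" "c \<ge> 0"
  and op: "\<And>v. v \<in> carrier_vec n \<Longrightarrow> vnorm (W *\<^sub>v v) \<le> c * vnorm v"
  shows "frob (W * Y) \<le> c * frob Y"
proof -
  have "(frob (W * Y))^2 = (\<Sum>j<m. (vnorm (col (W * Y) j))^2)"
    unfolding frob_square using assms by (intro frob_inner_self_cols) auto
  also have "\<dots> = (\<Sum>j<m. (vnorm (W *\<^sub>v col Y j))^2)"
    using assms by (intro sum.cong refl) auto
  also have "\<dots> \<le> (\<Sum>j<m. (c * vnorm (col Y j))^2)"
    using assms by (intro sum_mono power_mono op) auto
  also have "\<dots> = c^2 * (frob Y)^2"
    unfolding frob_square frob_inner_self_cols[OF assms(2)] by (simp add: sum_distrib_left power_mult_distrib)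
  also have "\<dots> = (c * frob Y)^2" by (simp add: power_mult_distrib)
  finally show ?thesis by (rule power2_le_imp_le) (use assms in simp)
qed

lemma frob_mult_ge: assumes "W \<in> carrier_mat k n" "Y \<in> carrier_mat n m" "c \<ge> 0"
  and op: "\<And>v. v \<in> carrier_vec n \<Longrightarrow> vnorm (W *\<^sub>v v) \<ge> c * vnorm v"
  shows "frob (W * Y) \<ge> c * frob Y"
proof -
  have "(c * frob Y)^2 = c^2 * (frob Y)^2" by (simp add: power_mult_distrib)
  also have "\<dots> = (\<Sum>j<m. (c * vnorm (col Y j))^2)"
    unfolding frob_square frob_inner_self_cols[OF assms(2)] by (simp add: sum_distrib_left power_mult_distrib)
  also have "\<dots> \<le> (\<Sum>j<m. (vnorm (W *\<^sub>v col Y j))^2)"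
    using assms by (intro sum_mono power_mono op) auto
  also have "\<dots> = (\<Sum>j<m. (vnorm (col (W * Y) j))^2)"
    using assms by (intro sum.cong refl) auto
  also have "\<dots> = (frob (W * Y))^2"
    unfolding frob_square using assms by (intro frob_inner_self_cols[symmetric]) auto
  finally show ?thesis by (rule power2_le_imp_le) simp
qed

lemma frob_mult_right_le: assumes "Y \<in> carrier_mat m n" "W \<in> carrier_mat n k" "c \<ge> 0"
  and op: "\<And>v. v \<in> carrier_vec n \<Longrightarrow> vnorm (transpose_mat W *\<^sub>v v) \<le> c * vnorm v"
  shows "frob (Y * W) \<le> c * frob Y"
proof -
  have "frob (Y * W) = frob (transpose_mat (Y * W))"
    using assms by (intro frob_transpose[symmetric, of _ m k]) auto
  also have "\<dots> = frob (transpose_mat W * transpose_mat Y)" using assms by (simp add: transpose_mult)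
  also have "\<dots> \<le> c * frob (transpose_mat Y)"
    by (rule frob_mult_le[of _ k n _ m]) (use assms op in auto)
  also have "\<dots> = c * frob Y" using frob_transpose[OF assms(1)] by simp
  finally show ?thesis .
qed

lemma frob_inner_mult_ge: assumes "X \<in> carrier_mat n n" "Y \<in> carrier_mat n m"
  and q: "\<And>v. v \<in> carrier_vec n \<Longrightarrow> (X *\<^sub>v v) \<bullet> v \<ge> c * (v \<bullet> v)"
  shows "frob_inner (X * Y) Y \<ge> c * frob_inner Y Y"
proof -
  have "c * frob_inner Y Y = (\<Sum>j<m. c * (col Y j \<bullet> col Y j))"
    unfolding frob_inner_cols[OF assms(2) assms(2)] by (simp add: sum_distrib_left)
  also have "\<dots> \<le> (\<Sum>j<m. (X *\<^sub>v col Y j) \<bullet> col Y j)"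
    using assms by (intro sum_mono q) auto
  also have "\<dots> = frob_inner (X * Y) Y"
    using assms by (subst frob_inner_cols[of _ n m]) (auto intro!: sum.cong)
  finally show ?thesis .
qed

lemma vnorm_mult_le_frob: assumes "N \<in> carrier_mat k n" "x \<in> carrier_vec n"
  shows "vnorm (N *\<^sub>v x) \<le> frob N * vnorm x"
proof -
  have "(vnorm (N *\<^sub>v x))^2 = (\<Sum>i<k. (row N i \<bullet> x)^2)"
    unfolding vnorm_def using assms by (simp add: sum_nonneg)
  also have "\<dots> \<le> (\<Sum>i<k. (vnorm (row N i))^2 * (vnorm x)^2)"
  proof (intro sum_mono)
    fix i assume i: "i \<in> {..<k}"
    have "\<bar>row N i \<bullet> x\<bar> \<le> vnorm (row N i) * vnorm x" using assms i by (intro abs_scalar_prod_le_vnorm[of _ n]) auto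
    hence "\<bar>row N i \<bullet> x\<bar>^2 \<le> (vnorm (row N i) * vnorm x)^2" by (intro power_mono) auto
    thus "(row N i \<bullet> x)^2 \<le> (vnorm (row N i))^2 * (vnorm x)^2" by (simp add: power_mult_distrib)
  qed
  also have "\<dots> = (\<Sum>i<k. (vnorm (row N i))^2) * (vnorm x)^2" by (simp add: sum_distrib_right)
  also have "(\<Sum>i<k. (vnorm (row N i))^2) = (frob N)^2"
    unfolding frob_def using assms by (simp add: vnorm_def sum_nonneg)
  finally have "(vnorm (N *\<^sub>v x))^2 \<le> (frob N * vnorm x)^2" by (simp add: power_mult_distrib)
  thus ?thesis by (rule power2_le_imp_le) simp
qed

section \<open>Extreme eigenvalues and the spectral norm\<close>

lemma sum_minus_smult_delta: assumes "i < n"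
  shows "(\<Sum>ia = 0..<n. (M $$ (i, ia) - c * (if i = ia then 1 else 0)) * (x::real vec) $ ia)
     = (\<Sum>ia = 0..<n. M $$ (i, ia) * x $ ia) - c * x $ i"
proof -
  have "(\<Sum>ia = 0..<n. (M $$ (i, ia) - c * (if i = ia then 1 else 0)) * x $ ia)
      = (\<Sum>ia = 0..<n. M $$ (i, ia) * x $ ia - (if i = ia then c * x $ ia else 0))"
    by (intro sum.cong) (auto simp: algebra_simps)
  also have "\<dots> = (\<Sum>ia = 0..<n. M $$ (i, ia) * x $ ia) - (\<Sum>ia = 0..<n. (if i = ia then c * x $ ia else 0))"
    by (rule sum_subtractf)
  also have "(\<Sum>ia = 0..<n. (if i = ia then c * x $ ia else 0)) = c * x $ i"
    using assms by simp
  finally show ?thesis .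
qed

lemma psd_vnorm_mult_square_le:
  assumes N: "N \<in> carrier_mat n n" and Nsym: "transpose_mat N = N"
    and psd: "\<And>y. y \<in> carrier_vec n \<Longrightarrow> 0 \<le> (N *\<^sub>v y) \<bullet> (y::real vec)"
    and x: "x \<in> carrier_vec n"
  shows "(vnorm (N *\<^sub>v x))^2 \<le> ((N *\<^sub>v x) \<bullet> x) * frob N"
proof -
  define z where "z = (vnorm (N *\<^sub>v x))^2"
  define q where "q = (N *\<^sub>v x) \<bullet> x"
  have Nxc: "N *\<^sub>v x \<in> carrier_vec n" using N x by simp
  have "(N *\<^sub>v (N *\<^sub>v x)) \<bullet> (N *\<^sub>v x) \<le> vnorm (N *\<^sub>v (N *\<^sub>v x)) * vnorm (N *\<^sub>v x)"
    using N x by (intro scalar_prod_le_vnorm[of _ n]) auto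
  also have "\<dots> \<le> (frob N * vnorm (N *\<^sub>v x)) * vnorm (N *\<^sub>v x)"
    by (intro mult_right_mono vnorm_mult_le_frob[OF N Nxc]) auto
  finally have NNx: "(N *\<^sub>v (N *\<^sub>v x)) \<bullet> (N *\<^sub>v x) \<le> frob N * z"
    unfolding z_def by (simp add: power2_eq_square algebra_simps)
  have "z * z \<le> q * ((N *\<^sub>v (N *\<^sub>v x)) \<bullet> (N *\<^sub>v x))"
    using psd_cauchy_schwarz[OF N Nsym psd x Nxc] unfolding z_def q_def vnorm_square
    by (simp add: power2_eq_square)
  also have "\<dots> \<le> (q * frob N) * z"
    using mult_left_mono[OF NNx psd[OF x]] unfolding q_def by (simp add: algebra_simps)
  finally have "z * z \<le> (q * frob N) * z" .
  moreover have "z \<ge> 0" "q * frob N \<ge> 0" unfolding z_def q_def using psd[OF x] by auto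
  ultimately have "z \<le> q * frob N" by (cases "z = 0") (auto intro: mult_right_le_imp_le)
  thus ?thesis unfolding z_def q_def .
qed

text \<open>\<open>1 = |x|\<^sup>2 \<le> |T|\<^sup>2 |N x|\<^sup>2 \<le> |T|\<^sup>2 |N| x\<^sup>T N x\<close>, the last step by
  Cauchy-Schwarz for the semi-inner product of \<open>N\<close>.\<close>

lemma nonsingular_psd_rayleigh_ge:
  assumes N: "N \<in> carrier_mat n n" and Nsym: "transpose_mat N = N"
    and psd: "\<And>y. y \<in> carrier_vec n \<Longrightarrow> 0 \<le> (N *\<^sub>v y) \<bullet> (y::real vec)"
    and T: "T \<in> carrier_mat n n" "T * N = 1\<^sub>m n"
    and x: "x \<in> carrier_vec n" "x \<bullet> x = 1"
  shows "1 \<le> (frob T)^2 * frob N * ((N *\<^sub>v x) \<bullet> x)"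
proof -
  have Nxc: "N *\<^sub>v x \<in> carrier_vec n" using N x by simp
  have "vnorm x = vnorm (T *\<^sub>v (N *\<^sub>v x))" using T N x by (simp add: assoc_mult_mat_vec[symmetric])
  also have "\<dots> \<le> frob T * vnorm (N *\<^sub>v x)" by (rule vnorm_mult_le_frob[OF T(1) Nxc])
  finally have "1 \<le> frob T * vnorm (N *\<^sub>v x)" using x unfolding vnorm_eq_sqrt_scalar_prod by simp
  hence "1 \<le> (frob T * vnorm (N *\<^sub>v x))^2" by (metis one_le_power)
  also have "\<dots> = (frob T)^2 * (vnorm (N *\<^sub>v x))^2" by (simp add: power_mult_distrib)
  also have "\<dots> \<le> (frob T)^2 * (((N *\<^sub>v x) \<bullet> x) * frob N)"
    by (intro mult_left_mono psd_vnorm_mult_square_le[OF N Nsym psd x(1)]) auto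
  finally show ?thesis by (simp add: algebra_simps)
qed

definition rayleigh_inf :: "nat \<Rightarrow> real mat \<Rightarrow> real" where
  "rayleigh_inf n M = Inf {(M *\<^sub>v x) \<bullet> x | x. x \<in> carrier_vec n \<and> x \<bullet> x = 1}"

lemma rayleigh_inf_le:
  assumes M: "M \<in> carrier_mat n n" and x: "x \<in> carrier_vec n" "x \<bullet> x = 1"
  shows "rayleigh_inf n M \<le> (M *\<^sub>v x) \<bullet> x"
  unfolding rayleigh_inf_def
proof (rule cInf_lower)
  show "bdd_below {(M *\<^sub>v x) \<bullet> x | x. x \<in> carrier_vec n \<and> x \<bullet> x = 1}"
  proof (rule bdd_belowI[of _ "- frob M"])
    fix s assume "s \<in> {(M *\<^sub>v x) \<bullet> x | x. x \<in> carrier_vec n \<and> x \<bullet> x = 1}"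
    then obtain y where y: "y \<in> carrier_vec n" "y \<bullet> y = 1" and s: "s = (M *\<^sub>v y) \<bullet> y" by auto
    have "\<bar>s\<bar> \<le> vnorm (M *\<^sub>v y) * vnorm y" unfolding s using M y by (intro abs_scalar_prod_le_vnorm[of _ n]) auto
    also have "\<dots> \<le> frob M" using vnorm_mult_le_frob[OF M y(1)] y(2) by (simp add: vnorm_eq_sqrt_scalar_prod)
    finally show "- frob M \<le> s" by simp
  qed
qed (use x in auto)

lemma rayleigh_inf_le_rayleigh:
  assumes M: "M \<in> carrier_mat n n" and x: "x \<in> carrier_vec n"
  shows "rayleigh_inf n M * (x \<bullet> x) \<le> (M *\<^sub>v x) \<bullet> x"
proof (cases "x = 0\<^sub>v n")
  case True thus ?thesis using M by simp
next
  case False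
  note un = normalize_vec[OF x False]
  let ?y = "(1 / vnorm x) \<cdot>\<^sub>v x"
  have "rayleigh_inf n M \<le> (M *\<^sub>v ?y) \<bullet> ?y" by (rule rayleigh_inf_le[OF M un(1,2)])
  also have "(M *\<^sub>v ?y) \<bullet> ?y = (1/vnorm x)^2 * ((M *\<^sub>v x) \<bullet> x)"
    using M x by (simp add: mult_mat_vec power2_eq_square)
  finally have "rayleigh_inf n M * (vnorm x)^2 \<le> (M *\<^sub>v x) \<bullet> x" using un(3) by (simp add: field_simps)
  thus ?thesis unfolding vnorm_square .
qed

text \<open>If \<open>N = M - c\<close> with \<open>c = rayleigh_inf n M\<close> were nonsingular, its Rayleigh quotients
  would be bounded below by a positive constant, contradicting the definition of \<open>c\<close>.\<close>

lemma det_minus_rayleigh_inf: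
  assumes M: "M \<in> carrier_mat n n" and sym: "transpose_mat M = M" and n: "n \<ge> 1"
  shows "det (M - rayleigh_inf n M \<cdot>\<^sub>m 1\<^sub>m n) = 0"
proof (rule ccontr)
  define c where "c = rayleigh_inf n M"
  define N where "N = M - c \<cdot>\<^sub>m 1\<^sub>m n"
  assume "det (M - rayleigh_inf n M \<cdot>\<^sub>m 1\<^sub>m n) \<noteq> 0"
  hence "det N \<noteq> 0" unfolding N_def c_def .
  have N: "N \<in> carrier_mat n n" unfolding N_def using M by simp
  have qN: "(N *\<^sub>v x) \<bullet> x = (M *\<^sub>v x) \<bullet> x - c * (x \<bullet> x)" if x: "x \<in> carrier_vec n" for x
  proof -
    have "N *\<^sub>v x = M *\<^sub>v x - c \<cdot>\<^sub>v x"
      unfolding N_def using M x by (intro eq_vecI) (auto simp: scalar_prod_def sum_minus_smult_delta)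
    thus ?thesis using M x by (simp add: minus_scalar_prod_distrib[of _ n])
  qed
  have Nsym: "transpose_mat N = N"
    unfolding N_def using M sym by (intro eq_matI) (auto, metis index_transpose_mat(1) carrier_matD)
  have Npsd: "0 \<le> (N *\<^sub>v x) \<bullet> x" if "x \<in> carrier_vec n" for x
    using rayleigh_inf_le_rayleigh[OF M that] qN[OF that] unfolding c_def by simp
  obtain T where T: "T \<in> carrier_mat n n" "T * N = 1\<^sub>m n"
    using det_non_zero_imp_unit[OF N \<open>det N \<noteq> 0\<close>, of "()"] unfolding Units_def ring_mat_def by auto
  define K where "K = (frob T)^2 * frob N"
  have key: "1 \<le> K * ((N *\<^sub>v x) \<bullet> x)" if "x \<in> carrier_vec n" "x \<bullet> x = 1" for x
    unfolding K_def by (rule nonsingular_psd_rayleigh_ge[OF N Nsym _ T that]) (use Npsd in auto)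
  have e0: "unit_vec n 0 \<in> carrier_vec n" "unit_vec n 0 \<bullet> unit_vec n 0 = (1::real)" using n by auto
  have "K \<ge> 0" unfolding K_def by simp
  moreover have "K \<noteq> 0" using key[OF e0] by auto
  ultimately have K: "K > 0" by simp
  have "c + 1 / K \<le> c"
    unfolding c_def rayleigh_inf_def
  proof (rule cInf_greatest)
    fix s assume "s \<in> {(M *\<^sub>v x) \<bullet> x | x. x \<in> carrier_vec n \<and> x \<bullet> x = 1}"
    then obtain x where x: "x \<in> carrier_vec n" "x \<bullet> x = 1" and s: "s = (M *\<^sub>v x) \<bullet> x" by auto
    have "1 / K \<le> (N *\<^sub>v x) \<bullet> x" using key[OF x] K by (simp add: field_simps)
    hence "c + 1 / K \<le> s" unfolding s qN[OF x(1)] x(2) by simp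
    thus "Inf {(M *\<^sub>v x) \<bullet> x | x. x \<in> carrier_vec n \<and> x \<bullet> x = 1} + 1 / K \<le> s"
      unfolding c_def rayleigh_inf_def .
  qed (use e0 in blast)
  thus False using K by simp
qed

lemma eigenvalue_rayleigh_inf:
  assumes M: "M \<in> carrier_mat n n" and sym: "transpose_mat M = M" and n: "n \<ge> 1"
  shows "eigenvalue M (rayleigh_inf n M)"
proof -
  have "char_matrix M (rayleigh_inf n M) = M - rayleigh_inf n M \<cdot>\<^sub>m 1\<^sub>m n"
    using M by (intro eq_matI) (auto simp: char_matrix_def)
  thus ?thesis unfolding eigenvalue_det[OF M] using det_minus_rayleigh_inf[OF M sym n] by simp
qed

lemma finite_eigenvalues: assumes M: "(M::real mat) \<in> carrier_mat n n"
  shows "finite {k. eigenvalue M k}"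
proof -
  have "char_poly M \<noteq> 0" using degree_monic_char_poly[OF M] by auto
  hence "finite {k. poly (char_poly M) k = 0}" by (rule poly_roots_finite)
  thus ?thesis using eigenvalue_root_char_poly[OF M] by simp
qed

lemma eigenvalue_uminus: assumes M: "(M::real mat) \<in> carrier_mat n n" and d: "eigenvalue (- M) d"
  shows "eigenvalue M (- d)"
proof -
  from d obtain v where v: "v \<in> carrier_vec n" "v \<noteq> 0\<^sub>v n" "(- M) *\<^sub>v v = d \<cdot>\<^sub>v v"
    unfolding eigenvalue_def eigenvector_def using M by auto
  have "M *\<^sub>v v = (- d) \<cdot>\<^sub>v v"
  proof (rule eq_vecI)
    fix i assume i: "i < dim_vec ((- d) \<cdot>\<^sub>v v)"
    have "((- M) *\<^sub>v v) $ i = (d \<cdot>\<^sub>v v) $ i" using v(3) by simp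
    thus "(M *\<^sub>v v) $ i = ((- d) \<cdot>\<^sub>v v) $ i" using i M v(1) by simp
  qed (use M v in simp)
  thus ?thesis unfolding eigenvalue_def eigenvector_def using v M by auto
qed

lemma transpose_uminus_symmetric: assumes "M \<in> carrier_mat n n" "transpose_mat M = M"
  shows "transpose_mat (- M) = (- M :: real mat)"
  using assms by (intro eq_matI) (auto, metis index_transpose_mat(1) carrier_matD)

lemma pos_def_eigenvalue_pos: assumes pd: "pos_def n M" and k: "eigenvalue M k"
  shows "k > 0"
proof -
  have M: "M \<in> carrier_mat n n" using pd unfolding pos_def_def by auto
  from k obtain v where v: "v \<in> carrier_vec n" "v \<noteq> 0\<^sub>v n" "M *\<^sub>v v = k \<cdot>\<^sub>v v"
    unfolding eigenvalue_def eigenvector_def using M by auto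
  have "0 < v \<bullet> (M *\<^sub>v v)" using pd v(1,2) unfolding pos_def_def by auto
  also have "\<dots> = k * (v \<bullet> v)" using v by simp
  finally show ?thesis using scalar_prod_self_nonneg[of v] by (simp add: zero_less_mult_iff)
qed

context
  fixes n :: nat and M :: "real mat"
  assumes M: "M \<in> carrier_mat n n" and sym: "transpose_mat M = M" and n: "n \<ge> 1"
begin

lemma lambda_min_le_rayleigh:
  assumes x: "x \<in> carrier_vec n" shows "lambda_min M * (x \<bullet> x) \<le> (M *\<^sub>v x) \<bullet> x"
proof -
  have "lambda_min M \<le> rayleigh_inf n M"
    unfolding lambda_min_def using finite_eigenvalues[OF M] eigenvalue_rayleigh_inf[OF M sym n]
    by (intro Min_le) auto
  thus ?thesis using rayleigh_inf_le_rayleigh[OF M x] mult_right_mono scalar_prod_self_nonneg[of x]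
    by (meson order_trans)
qed

lemma eigenvalue_lambda_min: "eigenvalue M (lambda_min M)"
proof -
  have "lambda_min M \<in> {k. eigenvalue M k}"
    unfolding lambda_min_def using finite_eigenvalues[OF M] eigenvalue_rayleigh_inf[OF M sym n]
    by (intro Min_in) auto
  thus ?thesis by simp
qed

lemma eigenvalue_uminus_rayleigh_inf: "eigenvalue M (- rayleigh_inf n (- M))"
  using eigenvalue_uminus[OF M eigenvalue_rayleigh_inf[OF _ transpose_uminus_symmetric[OF M sym] n]] M
  by simp

lemma rayleigh_le_lambda_max:
  assumes x: "x \<in> carrier_vec n" shows "(M *\<^sub>v x) \<bullet> x \<le> lambda_max M * (x \<bullet> x)"
proof -
  have "- rayleigh_inf n (- M) \<le> lambda_max M"
    unfolding lambda_max_def using finite_eigenvalues[OF M] eigenvalue_uminus_rayleigh_inf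
    by (intro Max_ge) auto
  moreover have "rayleigh_inf n (- M) * (x \<bullet> x) \<le> - ((M *\<^sub>v x) \<bullet> x)"
    using rayleigh_inf_le_rayleigh[of "- M" n x] M x by simp
  ultimately show ?thesis
    using mult_right_mono[of "- rayleigh_inf n (- M)" "lambda_max M" "x \<bullet> x"] scalar_prod_self_nonneg[of x]
    by simp
qed

lemma eigenvalue_lambda_max: "eigenvalue M (lambda_max M)"
proof -
  have "lambda_max M \<in> {k. eigenvalue M k}"
    unfolding lambda_max_def using finite_eigenvalues[OF M] eigenvalue_uminus_rayleigh_inf
    by (intro Max_in) auto
  thus ?thesis by simp
qed

end

lemma pos_def_carrier: "pos_def n M \<Longrightarrow> M \<in> carrier_mat n n"
  and pos_def_symmetric: "pos_def n M \<Longrightarrow> transpose_mat M = M"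
  unfolding pos_def_def by auto

context
  fixes n :: nat and M :: "real mat"
  assumes pd: "pos_def n M" and n: "n \<ge> 1"
begin

lemma lambda_min_pos: "lambda_min M > 0"
  using pos_def_eigenvalue_pos[OF pd eigenvalue_lambda_min[OF pos_def_carrier[OF pd] pos_def_symmetric[OF pd] n]] .

lemma lambda_max_pos: "lambda_max M > 0"
  using pos_def_eigenvalue_pos[OF pd eigenvalue_lambda_max[OF pos_def_carrier[OF pd] pos_def_symmetric[OF pd] n]] .

lemma vnorm_mult_le_lambda_max:
  assumes x: "x \<in> carrier_vec n" shows "vnorm (M *\<^sub>v x) \<le> lambda_max M * vnorm x"
proof -
  note M = pos_def_carrier[OF pd] and lle = rayleigh_le_lambda_max[OF pos_def_carrier[OF pd] pos_def_symmetric[OF pd] n]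
  have psd: "(M *\<^sub>v y) \<bullet> y \<ge> 0" if y: "y \<in> carrier_vec n" for y
    using lambda_min_le_rayleigh[OF pos_def_carrier[OF pd] pos_def_symmetric[OF pd] n y] lambda_min_pos
      scalar_prod_self_nonneg[of y] by (smt (verit) mult_nonneg_nonneg)
  have Mx: "M *\<^sub>v x \<in> carrier_vec n" using M x by simp
  have "((M *\<^sub>v x) \<bullet> (M *\<^sub>v x))^2 \<le> ((M *\<^sub>v x) \<bullet> x) * ((M *\<^sub>v (M *\<^sub>v x)) \<bullet> (M *\<^sub>v x))"
    by (rule psd_cauchy_schwarz[OF M pos_def_symmetric[OF pd] psd x Mx])
  also have "\<dots> \<le> (lambda_max M * (x \<bullet> x)) * (lambda_max M * ((M *\<^sub>v x) \<bullet> (M *\<^sub>v x)))"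
    by (intro mult_mono lle x Mx psd) (use lambda_max_pos scalar_prod_self_nonneg in auto)
  finally have "(vnorm (M *\<^sub>v x))^2 * (vnorm (M *\<^sub>v x))^2
      \<le> ((lambda_max M)^2 * (vnorm x)^2) * (vnorm (M *\<^sub>v x))^2"
    unfolding vnorm_square by (simp add: power2_eq_square algebra_simps)
  hence "(vnorm (M *\<^sub>v x))^2 \<le> (lambda_max M)^2 * (vnorm x)^2"
  proof (cases "vnorm (M *\<^sub>v x) = 0")
    case False
    hence "(vnorm (M *\<^sub>v x))^2 > 0" by simp
    with \<open>(vnorm (M *\<^sub>v x))^2 * (vnorm (M *\<^sub>v x))^2
        \<le> ((lambda_max M)^2 * (vnorm x)^2) * (vnorm (M *\<^sub>v x))^2\<close> show ?thesis
      by (rule mult_right_le_imp_le)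
  qed simp
  hence "(vnorm (M *\<^sub>v x))^2 \<le> (lambda_max M * vnorm x)^2" by (simp add: power_mult_distrib)
  thus ?thesis by (rule power2_le_imp_le) (use lambda_max_pos in simp)
qed

lemma vnorm_mult_ge_lambda_min:
  assumes x: "x \<in> carrier_vec n" shows "lambda_min M * vnorm x \<le> vnorm (M *\<^sub>v x)"
proof (cases "vnorm x = 0")
  case False
  hence vx: "vnorm x > 0" using vnorm_nonneg[of x] by linarith
  have "lambda_min M * (vnorm x)^2 \<le> (M *\<^sub>v x) \<bullet> x"
    using lambda_min_le_rayleigh[OF pos_def_carrier[OF pd] pos_def_symmetric[OF pd] n x] unfolding vnorm_square .
  also have "\<dots> \<le> vnorm (M *\<^sub>v x) * vnorm x"
    using pos_def_carrier[OF pd] x by (intro scalar_prod_le_vnorm[of _ n]) auto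
  finally have "(lambda_min M * vnorm x) * vnorm x \<le> vnorm (M *\<^sub>v x) * vnorm x"
    by (simp add: power2_eq_square algebra_simps)
  thus ?thesis using vx by (rule mult_right_le_imp_le)
qed simp

end

lemma vnorm_transpose_mult_le: assumes A: "A \<in> carrier_mat m n" and a: "a \<ge> 0"
  and op: "\<And>x. x \<in> carrier_vec n \<Longrightarrow> vnorm (A *\<^sub>v x) \<le> a * vnorm x"
  and w: "w \<in> carrier_vec m"
  shows "vnorm (transpose_mat A *\<^sub>v w) \<le> a * vnorm (w::real vec)"
proof -
  let ?z = "transpose_mat A *\<^sub>v w"
  have z: "?z \<in> carrier_vec n" using A w by simp
  have "(vnorm ?z)^2 = ?z \<bullet> ?z" by (rule vnorm_square)
  also have "\<dots> = w \<bullet> (A *\<^sub>v ?z)"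
    using scalar_prod_mult_mat_vec_transpose[of "transpose_mat A" n m w ?z] A w by simp
  also have "\<dots> \<le> vnorm w * vnorm (A *\<^sub>v ?z)" using A w by (intro scalar_prod_le_vnorm[of _ m]) auto
  also have "\<dots> \<le> vnorm w * (a * vnorm ?z)" by (intro mult_left_mono op z) auto
  finally have h: "vnorm ?z * vnorm ?z \<le> (a * vnorm w) * vnorm ?z" by (simp add: power2_eq_square algebra_simps)
  show ?thesis
  proof (cases "vnorm ?z = 0")
    case True thus ?thesis using a by simp
  next
    case False
    hence "vnorm ?z > 0" using vnorm_nonneg[of ?z] by linarith
    from mult_right_le_imp_le[OF h this] show ?thesis .
  qed
qed

lemma vnorm_mult_le_spec_norm_unit:
  assumes A: "A \<in> carrier_mat m n" and x: "x \<in> carrier_vec n" "vnorm x = 1"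
  shows "vnorm (A *\<^sub>v x) \<le> spec_norm A"
  unfolding spec_norm_def
proof (rule cSup_upper)
  show "bdd_above {vnorm (A *\<^sub>v x) | x. x \<in> carrier_vec (dim_col A) \<and> vnorm x = 1}"
  proof (rule bdd_aboveI[of _ "frob A"])
    fix s assume "s \<in> {vnorm (A *\<^sub>v x) | x. x \<in> carrier_vec (dim_col A) \<and> vnorm x = 1}"
    then obtain y where "y \<in> carrier_vec n" "vnorm y = 1" "s = vnorm (A *\<^sub>v y)" using A by auto
    thus "s \<le> frob A" using vnorm_mult_le_frob[OF A] by fastforce
  qed
qed (use A x in auto)

lemma spec_norm_nonneg: assumes A: "A \<in> carrier_mat m n" and n: "n \<ge> 1"
  shows "spec_norm A \<ge> 0"
proof -
  have "unit_vec n 0 \<in> carrier_vec n" "vnorm (unit_vec n 0 :: real vec) = 1"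
    using n by (auto simp: vnorm_eq_sqrt_scalar_prod)
  from vnorm_mult_le_spec_norm_unit[OF A this] show ?thesis using vnorm_nonneg by (meson order.trans)
qed

lemma vnorm_mult_le_spec_norm: assumes A: "A \<in> carrier_mat m n" and x: "x \<in> carrier_vec n"
  shows "vnorm (A *\<^sub>v x) \<le> spec_norm A * vnorm x"
proof (cases "x = 0\<^sub>v n")
  case True thus ?thesis using A by (simp add: vnorm_def)
next
  case False
  note un = normalize_vec[OF x False]
  let ?y = "(1 / vnorm x) \<cdot>\<^sub>v x"
  have "vnorm ?y = 1" using un(3) by (simp add: vnorm_smult)
  from vnorm_mult_le_spec_norm_unit[OF A un(1) this]
  have "vnorm (A *\<^sub>v ?y) \<le> spec_norm A" .
  also have "A *\<^sub>v ?y = (1 / vnorm x) \<cdot>\<^sub>v (A *\<^sub>v x)" using A x by (rule mult_mat_vec)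
  finally have "vnorm (A *\<^sub>v x) / vnorm x \<le> spec_norm A" using un(3) by (simp add: vnorm_smult)
  thus ?thesis using un(3) by (simp add: field_simps)
qed

section \<open>Perturbation of isometries\<close>

lemma vnorm_isometry_mult:
  assumes U: "U \<in> carrier_mat p r" and UU: "transpose_mat U * U = 1\<^sub>m r" and x: "x \<in> carrier_vec r"
  shows "vnorm (U *\<^sub>v x) = vnorm x"
proof -
  have "(U *\<^sub>v x) \<bullet> (U *\<^sub>v x) = x \<bullet> (transpose_mat U *\<^sub>v (U *\<^sub>v x))"
    using U x by (intro scalar_prod_mult_mat_vec_transpose) auto
  also have "transpose_mat U *\<^sub>v (U *\<^sub>v x) = x"
    using U x UU by (simp add: assoc_mult_mat_vec[symmetric, of _ r p])
  finally show ?thesis unfolding vnorm_eq_sqrt_scalar_prod by simp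
qed

lemma vnorm_transpose_isometry_mult_le:
  assumes U: "U \<in> carrier_mat p r" and UU: "transpose_mat U * U = 1\<^sub>m r" and w: "w \<in> carrier_vec p"
  shows "vnorm (transpose_mat U *\<^sub>v w) \<le> 1 * vnorm w"
  using vnorm_transpose_mult_le[OF U _ _ w, of 1] vnorm_isometry_mult[OF U UU] by simp

lemma frob_transpose_isometry_mult_le:
  assumes U: "U \<in> carrier_mat p r" and UU: "transpose_mat U * U = 1\<^sub>m r" and Y: "Y \<in> carrier_mat p m"
  shows "frob (transpose_mat U * Y) \<le> frob Y"
proof -
  have "frob (transpose_mat U * Y) \<le> 1 * frob Y"
    by (rule frob_mult_le[OF _ Y _ vnorm_transpose_isometry_mult_le[OF U UU]]) (use U in auto)
  thus ?thesis by simp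
qed

lemma isometry_cancel_left:
  assumes U: "U \<in> carrier_mat p r" and UU: "transpose_mat U * U = 1\<^sub>m r" and Y: "dim_row Y = r"
  shows "transpose_mat U * (U * Y) = (Y::real mat)"
  using mat_mult_assoc[of "transpose_mat U" U Y] U UU Y by simp

lemma frob_inner_isometry_mult: assumes U: "U \<in> carrier_mat p r" and UU: "transpose_mat U * U = 1\<^sub>m r"
  and X: "X \<in> carrier_mat r k" and Y: "Y \<in> carrier_mat r k"
  shows "frob_inner (U * X) (U * Y) = frob_inner X Y"
proof -
  have "frob_inner (U * X) (U * Y) = frob_inner X (transpose_mat U * (U * Y))"
    using U X Y by (intro frob_inner_mult_left) auto
  also have "transpose_mat U * (U * Y) = Y"
    using U Y UU by (simp add: assoc_mult_mat[symmetric, of _ r p])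
  finally show ?thesis .
qed

lemma frob_isometry_mult:
  assumes U: "U \<in> carrier_mat p r" and UU: "transpose_mat U * U = 1\<^sub>m r" and X: "X \<in> carrier_mat r k"
  shows "frob (U * X) = frob X"
  unfolding frob_eq_sqrt_frob_inner using frob_inner_isometry_mult[OF U UU X X] by simp

lemma frob_inner_isometry_self: assumes U: "U \<in> carrier_mat p r" and UU: "transpose_mat U * U = 1\<^sub>m r"
  shows "frob_inner U U = real r"
  using frob_inner_isometry_mult[OF U UU one_carrier_mat one_carrier_mat] frob_inner_one U by simp

lemma frob_inner_isometry_residual:
  assumes U: "U \<in> carrier_mat p r" and UU: "transpose_mat U * U = 1\<^sub>m r"
    and V: "V \<in> carrier_mat p r" and VV: "transpose_mat V * V = 1\<^sub>m r"
  shows "frob_inner (V - U * (transpose_mat U * V)) (V - U * (transpose_mat U * V))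
    = real r - frob_inner (transpose_mat U * V) (transpose_mat U * V)"
proof -
  define Q where "Q = transpose_mat U * V"
  have Q: "Q \<in> carrier_mat r r" unfolding Q_def using U V by simp
  have "frob_inner V (U * Q) = frob_inner (U * Q) V" using U V Q by (intro frob_inner_commute[of _ p r]) auto
  also have "\<dots> = frob_inner Q Q" unfolding Q_def using U V by (intro frob_inner_mult_left) auto
  finally have cross: "frob_inner V (U * Q) = frob_inner Q Q" .
  have "frob_inner (V - U * Q) (V - U * Q) = frob_inner V V - 2 * frob_inner V (U * Q) + frob_inner (U * Q) (U * Q)"
    using U V Q by (intro frob_inner_diff_self) auto
  thus ?thesis unfolding Q_def[symmetric] cross frob_inner_isometry_mult[OF U UU Q Q]
      frob_inner_isometry_self[OF V VV] by simp
qed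

lemma frob_isometry_residual_swap:
  assumes U: "U \<in> carrier_mat p r" and UU: "transpose_mat U * U = 1\<^sub>m r"
    and V: "V \<in> carrier_mat p r" and VV: "transpose_mat V * V = 1\<^sub>m r"
  shows "frob (U - V * transpose_mat (transpose_mat U * V)) = frob (V - U * (transpose_mat U * V))"
proof -
  have QT: "transpose_mat (transpose_mat U * V) = transpose_mat V * U"
    using U V by (simp add: transpose_mult[of _ r p])
  have "frob_inner (transpose_mat V * U) (transpose_mat V * U) = frob_inner (transpose_mat U * V) (transpose_mat U * V)"
    unfolding QT[symmetric] using U V by (intro frob_inner_transpose[of _ r r]) auto
  thus ?thesis unfolding frob_eq_sqrt_frob_inner QT
    using frob_inner_isometry_residual[OF U UU V VV] frob_inner_isometry_residual[OF V VV U UU] by simp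
qed

lemma frob_proj_complement_le:
  assumes U: "U \<in> carrier_mat p r" and UU: "transpose_mat U * U = 1\<^sub>m r" and Y: "Y \<in> carrier_mat p k"
  shows "frob (Y - U * (transpose_mat U * Y)) \<le> frob Y"
proof -
  define V where "V = transpose_mat U * Y"
  have V: "V \<in> carrier_mat r k" unfolding V_def using U Y by simp
  have "frob_inner Y (U * V) = frob_inner (U * V) Y" using U V Y by (intro frob_inner_commute[of _ p k]) auto
  also have "\<dots> = frob_inner V V" unfolding V_def using U Y by (intro frob_inner_mult_left) auto
  finally have cross: "frob_inner Y (U * V) = frob_inner V V" .
  have "(frob (Y - U * V))^2 = frob_inner Y Y - 2 * frob_inner Y (U * V) + frob_inner (U * V) (U * V)"
    unfolding frob_square using U V Y by (intro frob_inner_diff_self) auto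
  also have "\<dots> \<le> (frob Y)^2"
    unfolding cross frob_inner_isometry_mult[OF U UU V V] frob_square using frob_inner_self_nonneg[of V] by simp
  finally show ?thesis unfolding V_def by (rule power2_le_imp_le) simp
qed

text \<open>\<open>(U0 - U U\<^sup>T U0) M0 = - (1 - U U\<^sup>T) (\<Sigma> - \<Sigma>0) U0\<close>, and the projection
  \<open>1 - U U\<^sup>T\<close> and the isometry \<open>U0\<close> do not increase the Frobenius norm.\<close>

lemma frob_residual_le_sigma_diff:
  assumes U: "U \<in> carrier_mat p r" and UU: "transpose_mat U * U = 1\<^sub>m r"
    and U0: "U0 \<in> carrier_mat p r" and UU0: "transpose_mat U0 * U0 = 1\<^sub>m r"
    and M: "M \<in> carrier_mat r r" and M0: "M0 \<in> carrier_mat r r" and M0t: "transpose_mat M0 = M0"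
    and lam: "lam \<ge> 0" and M0_ge: "\<And>x. x \<in> carrier_vec r \<Longrightarrow> lam * vnorm x \<le> vnorm (M0 *\<^sub>v x)"
  shows "lam * frob (U0 - U * (transpose_mat U * U0))
    \<le> frob (U * M * transpose_mat U - U0 * M0 * transpose_mat U0)"
proof -
  define D where "D = U * M * transpose_mat U - U0 * M0 * transpose_mat U0"
  define E where "E = U0 - U * (transpose_mat U * U0)"
  define W where "W = D * U0"
  have Dc: "D \<in> carrier_mat p p" unfolding D_def using U U0 M M0 by simp
  have Ec: "E \<in> carrier_mat p r" unfolding E_def using U U0 by simp
  have Wc: "W \<in> carrier_mat p r" unfolding W_def using Dc U0 by simp
  note dU = carrier_matD[OF U] and dU0 = carrier_matD[OF U0] and dM = carrier_matD[OF M]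
    and dM0 = carrier_matD[OF M0]
  have W1: "W = U * (M * (transpose_mat U * U0)) - U0 * M0"
    unfolding W_def D_def using dU dU0 dM dM0 UU0 isometry_cancel_left[OF U0 UU0]
    by (simp add: mat_dim_simps)
  have "U * (transpose_mat U * W) = U * (M * (transpose_mat U * U0)) - U * ((transpose_mat U * U0) * M0)"
    unfolding W1 using dU dU0 dM dM0 isometry_cancel_left[OF U UU] by (simp add: mat_dim_simps)
  moreover have "E * M0 = U0 * M0 - U * ((transpose_mat U * U0) * M0)"
    unfolding E_def using dU dU0 dM0 by (simp add: mat_dim_simps)
  ultimately have EM: "E * M0 = - (W - U * (transpose_mat U * W))"
    unfolding W1 using dU dU0 dM dM0 by (intro eq_matI) auto
  have "lam * frob E = lam * frob (transpose_mat E)" using frob_transpose[OF Ec] by simp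
  also have "\<dots> \<le> frob (M0 * transpose_mat E)"
    using M0_ge lam Ec by (intro frob_mult_ge[OF M0]) auto
  also have "M0 * transpose_mat E = transpose_mat (E * M0)"
    using Ec M0 M0t by (simp add: transpose_mult[of _ p r])
  also have "frob (transpose_mat (E * M0)) = frob (W - U * (transpose_mat U * W))"
    unfolding EM using Ec M0 Wc U by (simp add: frob_transpose[of _ p r] frob_uminus[of _ p r])
  also have "\<dots> \<le> frob W" by (rule frob_proj_complement_le[OF U UU Wc])
  also have "\<dots> \<le> 1 * frob D"
    unfolding W_def by (rule frob_mult_right_le[OF Dc U0 _ vnorm_transpose_isometry_mult_le[OF U0 UU0]]) simp
  finally show ?thesis unfolding D_def E_def by simp
qed

text \<open>Pairing with \<open>K\<close>: \<open>\<langle>X K + K Y, K\<rangle> \<ge> c |K|\<^sup>2\<close>.\<close>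

lemma frob_sylvester_ge:
  assumes X: "X \<in> carrier_mat n n" and Y: "Y \<in> carrier_mat n n" and K: "K \<in> carrier_mat n n"
    and Yt: "transpose_mat Y = Y"
    and X_psd: "\<And>v. v \<in> carrier_vec n \<Longrightarrow> 0 \<le> (X *\<^sub>v v) \<bullet> v"
    and Y_ge: "\<And>v. v \<in> carrier_vec n \<Longrightarrow> c * (v \<bullet> v) \<le> (Y *\<^sub>v v) \<bullet> v"
  shows "c * frob K \<le> frob (X * K + K * Y)"
proof -
  have "0 * frob_inner K K \<le> frob_inner (X * K) K" by (rule frob_inner_mult_ge[OF X K]) (use X_psd in simp)
  moreover have "c * frob_inner K K \<le> frob_inner (K * Y) K"
  proof -
    have "transpose_mat (K * Y) = Y * transpose_mat K" using K Y Yt by (simp add: transpose_mult[of _ n n])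
    hence "frob_inner (K * Y) K = frob_inner (Y * transpose_mat K) (transpose_mat K)"
      using K Y frob_inner_transpose[of "K * Y" n n K] by simp
    moreover have "c * frob_inner (transpose_mat K) (transpose_mat K) \<le> frob_inner (Y * transpose_mat K) (transpose_mat K)"
      by (rule frob_inner_mult_ge[OF Y]) (use K Y_ge in auto)
    ultimately show ?thesis unfolding frob_inner_transpose[OF K K] by simp
  qed
  ultimately have "c * (frob K)^2 \<le> frob_inner (X * K + K * Y) K"
    unfolding frob_square using frob_inner_add_left[of "X * K" n n "K * Y" K] X Y K by simp
  also have "\<dots> \<le> frob (X * K + K * Y) * frob K" using X Y K by (intro frob_inner_le_frob[of _ n n]) auto
  finally have "(c * frob K) * frob K \<le> frob (X * K + K * Y) * frob K" by (simp add: power2_eq_square)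
  thus ?thesis by (cases "frob K = 0") (auto intro: mult_right_le_imp_le simp: less_le)
qed

lemma top_blocks_sylvester_eq:
  fixes P U V Q :: "real mat"
  assumes P: "P \<in> carrier_mat p r" and U: "U \<in> carrier_mat p r" and V: "V \<in> carrier_mat p r"
    and Q: "Q \<in> carrier_mat r r"
    and Ut: "transpose_mat (transpose_mat P * U) = transpose_mat P * U"
    and Vt: "transpose_mat (transpose_mat P * V) = transpose_mat P * V"
  shows "(transpose_mat P * U) * (Q - 1\<^sub>m r) + (Q - 1\<^sub>m r) * (transpose_mat P * V)
    = - (transpose_mat P * (V - U * Q) + transpose_mat (transpose_mat P * (U - V * transpose_mat Q)))"
proof -
  define T where "T = transpose_mat P * U"
  define T0 where "T0 = transpose_mat P * V"
  have Tc: "T \<in> carrier_mat r r" "T0 \<in> carrier_mat r r" unfolding T_def T0_def using P U V by auto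
  note dP = carrier_matD[OF P] and dU = carrier_matD[OF U] and dV = carrier_matD[OF V]
    and dQ = carrier_matD[OF Q] and dT = carrier_matD[OF Tc(1)] carrier_matD[OF Tc(2)]
  have "transpose_mat P * (V - U * Q) = T0 - T * Q"
    unfolding T_def T0_def using dP dU dV dQ by (simp add: mat_dim_simps)
  moreover have "transpose_mat (transpose_mat P * (U - V * transpose_mat Q)) = T - Q * T0"
    using Ut[folded T_def] Vt[folded T0_def] dP dU dV dQ
    unfolding T_def T0_def by (simp add: mat_dim_simps)
  moreover have "T * (Q - 1\<^sub>m r) + (Q - 1\<^sub>m r) * T0 = (T * Q - T) + (Q * T0 - T0)"
    using dT dQ by (simp add: mat_dim_simps)
  ultimately show ?thesis unfolding T_def[symmetric] T0_def[symmetric]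
    using Tc Q by (intro eq_matI) auto
qed

text \<open>Comparing the symmetric top blocks \<open>P\<^sup>T U\<close> and \<open>P\<^sup>T U0\<close>: \<open>K = U\<^sup>T U0 - 1\<close> solves a
  Sylvester equation whose right-hand side is made of the residuals \<open>U0 - U Q\<close> and
  \<open>U - U0 Q\<^sup>T\<close>, \<open>Q = U\<^sup>T U0\<close>, which have the same norm.\<close>

lemma frob_cross_gram_deviation_le:
  assumes P: "P \<in> carrier_mat p r" and PP: "transpose_mat P * P = 1\<^sub>m r"
    and U: "U \<in> carrier_mat p r" and UU: "transpose_mat U * U = 1\<^sub>m r"
    and U0: "U0 \<in> carrier_mat p r" and UU0: "transpose_mat U0 * U0 = 1\<^sub>m r"
    and Ut: "transpose_mat (transpose_mat P * U) = transpose_mat P * U"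
    and U0t: "transpose_mat (transpose_mat P * U0) = transpose_mat P * U0"
    and U_psd: "\<And>v. v \<in> carrier_vec r \<Longrightarrow> 0 \<le> ((transpose_mat P * U) *\<^sub>v v) \<bullet> v"
    and U0_ge: "\<And>v. v \<in> carrier_vec r \<Longrightarrow> c * (v \<bullet> v) \<le> ((transpose_mat P * U0) *\<^sub>v v) \<bullet> v"
  shows "c * frob (transpose_mat U * U0 - 1\<^sub>m r) \<le> 2 * frob (U0 - U * (transpose_mat U * U0))"
proof -
  define Q where "Q = transpose_mat U * U0"
  define E where "E = U0 - U * Q"
  define F where "F = U - U0 * transpose_mat Q"
  have Qc: "Q \<in> carrier_mat r r" unfolding Q_def using U U0 by simp
  have Ec: "E \<in> carrier_mat p r" "F \<in> carrier_mat p r" unfolding E_def F_def using U U0 Qc by auto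
  have FE: "frob F = frob E"
    unfolding F_def E_def Q_def by (rule frob_isometry_residual_swap[OF U UU U0 UU0])
  have "c * frob (Q - 1\<^sub>m r)
      \<le> frob ((transpose_mat P * U) * (Q - 1\<^sub>m r) + (Q - 1\<^sub>m r) * (transpose_mat P * U0))"
    using P U U0 Qc U0t U_psd U0_ge by (intro frob_sylvester_ge[of _ r]) auto
  also have "\<dots> = frob (transpose_mat P * E + transpose_mat (transpose_mat P * F))"
    unfolding E_def F_def using top_blocks_sylvester_eq[OF P U U0 Qc Ut U0t] P U U0 Qc
    by (simp add: frob_uminus[of _ r r])
  also have "\<dots> \<le> frob (transpose_mat P * E) + frob (transpose_mat (transpose_mat P * F))"
    using Ec P by (intro frob_add_le[of _ r r]) auto
  also have "\<dots> \<le> 2 * frob E"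
    using frob_transpose_isometry_mult_le[OF P PP Ec(1)] frob_transpose_isometry_mult_le[OF P PP Ec(2)]
      FE frob_transpose[of "transpose_mat P * F" r r] Ec P
    by simp
  finally show ?thesis unfolding E_def Q_def .
qed

lemma frob_isometry_diff_le:
  assumes U: "U \<in> carrier_mat p r" and UU: "transpose_mat U * U = 1\<^sub>m r"
    and U0: "U0 \<in> carrier_mat p r" and UU0: "transpose_mat U0 * U0 = 1\<^sub>m r"
  shows "frob (U - U0) \<le> frob (U0 - U * (transpose_mat U * U0)) + frob (transpose_mat U * U0 - 1\<^sub>m r)"
proof -
  define Q where "Q = transpose_mat U * U0"
  have Qc: "Q \<in> carrier_mat r r" unfolding Q_def using U U0 by simp
  have "U0 * transpose_mat (Q - 1\<^sub>m r) = U0 * transpose_mat Q - U0"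
    using carrier_matD[OF U0] carrier_matD[OF Qc] by (simp add: mat_dim_simps)
  hence "U - U0 = (U - U0 * transpose_mat Q) + U0 * transpose_mat (Q - 1\<^sub>m r)"
    using U U0 Qc by (intro eq_matI) auto
  hence "frob (U - U0) \<le> frob (U - U0 * transpose_mat Q) + frob (U0 * transpose_mat (Q - 1\<^sub>m r))"
    using frob_add_le[of "U - U0 * transpose_mat Q" p r] U U0 Qc by simp
  also have "frob (U0 * transpose_mat (Q - 1\<^sub>m r)) = frob (Q - 1\<^sub>m r)"
    using frob_isometry_mult[OF U0 UU0, of "transpose_mat (Q - 1\<^sub>m r)" r] frob_transpose[of "Q - 1\<^sub>m r" r r] Qc
    by simp
  finally show ?thesis
    unfolding Q_def frob_isometry_residual_swap[OF U UU U0 UU0] .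
qed

lemma core_diff_decomposition:
  fixes U U0 M M0 :: "real mat"
  assumes U: "U \<in> carrier_mat p r" and UU: "transpose_mat U * U = 1\<^sub>m r"
    and U0: "U0 \<in> carrier_mat p r" and UU0: "transpose_mat U0 * U0 = 1\<^sub>m r"
    and M: "M \<in> carrier_mat r r" and M0: "M0 \<in> carrier_mat r r"
  defines "S0 \<equiv> U0 * M0 * transpose_mat U0"
  shows "M - M0 = transpose_mat U * ((U * M * transpose_mat U - S0) * U)
    + transpose_mat U * (S0 * (U - U0)) + transpose_mat (U - U0) * (S0 * U0)"
proof -
  note dU = carrier_matD[OF U] and dU0 = carrier_matD[OF U0] and dM = carrier_matD[OF M]
    and dM0 = carrier_matD[OF M0]
  have t1: "transpose_mat U * ((U * M * transpose_mat U - S0) * U)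
      = M - transpose_mat U * (U0 * (M0 * (transpose_mat U0 * U)))"
    unfolding S0_def using dU dU0 dM dM0 UU isometry_cancel_left[OF U UU]
    by (simp add: mat_dim_simps)
  have t2: "transpose_mat U * (S0 * (U - U0))
      = transpose_mat U * (U0 * (M0 * (transpose_mat U0 * U))) - transpose_mat U * (U0 * M0)"
    unfolding S0_def using dU dU0 dM0 UU0 isometry_cancel_left[OF U0 UU0]
    by (simp add: mat_dim_simps)
  have t3: "transpose_mat (U - U0) * (S0 * U0) = transpose_mat U * (U0 * M0) - M0"
    unfolding S0_def using dU dU0 dM0 UU0 isometry_cancel_left[OF U0 UU0]
    by (simp add: mat_dim_simps)
  show ?thesis unfolding t1 t2 t3 using U U0 M M0 by (intro eq_matI) auto
qed

lemma vnorm_isometry_conj_mult_le: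
  assumes U0: "U0 \<in> carrier_mat p r" and UU0: "transpose_mat U0 * U0 = 1\<^sub>m r"
    and M0: "M0 \<in> carrier_mat r r" and Lam: "Lam \<ge> 0"
    and M0_le: "\<And>x. x \<in> carrier_vec r \<Longrightarrow> vnorm (M0 *\<^sub>v x) \<le> Lam * vnorm x"
    and v: "v \<in> carrier_vec p"
  shows "vnorm ((U0 * M0 * transpose_mat U0) *\<^sub>v v) \<le> Lam * vnorm v"
proof -
  have "(U0 * M0 * transpose_mat U0) *\<^sub>v v = U0 *\<^sub>v (M0 *\<^sub>v (transpose_mat U0 *\<^sub>v v))"
    using U0 M0 v by (subst assoc_mult_mat_vec[of "U0 * M0" p r "transpose_mat U0" p v]) auto
  hence "vnorm ((U0 * M0 * transpose_mat U0) *\<^sub>v v) = vnorm (M0 *\<^sub>v (transpose_mat U0 *\<^sub>v v))"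
    using vnorm_isometry_mult[OF U0 UU0] M0 U0 v by simp
  also have "\<dots> \<le> Lam * vnorm (transpose_mat U0 *\<^sub>v v)" using U0 v by (intro M0_le) simp
  also have "\<dots> \<le> Lam * vnorm v"
    using vnorm_transpose_isometry_mult_le[OF U0 UU0 v] Lam by (intro mult_left_mono) auto
  finally show ?thesis .
qed

lemma frob_core_diff_le:
  assumes U: "U \<in> carrier_mat p r" and UU: "transpose_mat U * U = 1\<^sub>m r"
    and U0: "U0 \<in> carrier_mat p r" and UU0: "transpose_mat U0 * U0 = 1\<^sub>m r"
    and M: "M \<in> carrier_mat r r" and M0: "M0 \<in> carrier_mat r r" and M0t: "transpose_mat M0 = M0"
    and Lam: "Lam \<ge> 0" and M0_le: "\<And>x. x \<in> carrier_vec r \<Longrightarrow> vnorm (M0 *\<^sub>v x) \<le> Lam * vnorm x"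
  shows "frob (M - M0)
    \<le> frob (U * M * transpose_mat U - U0 * M0 * transpose_mat U0) + 2 * Lam * frob (U - U0)"
proof -
  define S0 where "S0 = U0 * M0 * transpose_mat U0"
  define D where "D = U * M * transpose_mat U - S0"
  define Dl where "Dl = U - U0"
  have S0c: "S0 \<in> carrier_mat p p" unfolding S0_def using U0 M0 by simp
  have Dc: "D \<in> carrier_mat p p" unfolding D_def using U M S0c by simp
  have Dlc: "Dl \<in> carrier_mat p r" unfolding Dl_def using U U0 by simp
  have "\<And>v. v \<in> carrier_vec p \<Longrightarrow> vnorm (S0 *\<^sub>v v) \<le> Lam * vnorm v"
    unfolding S0_def by (rule vnorm_isometry_conj_mult_le[OF U0 UU0 M0 Lam M0_le])
  hence S0Dl: "frob (S0 * Dl) \<le> Lam * frob Dl" by (rule frob_mult_le[OF S0c Dlc Lam])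
  have b1: "frob (transpose_mat U * (D * U)) \<le> frob D"
    using frob_transpose_isometry_mult_le[OF U UU, of "D * U" r]
      frob_mult_right_le[OF Dc U _ vnorm_transpose_isometry_mult_le[OF U UU]] Dc U
    by simp
  have b2: "frob (transpose_mat U * (S0 * Dl)) \<le> Lam * frob Dl"
    using frob_transpose_isometry_mult_le[OF U UU, of "S0 * Dl" r] S0Dl S0c Dlc by simp
  have b3: "frob (transpose_mat Dl * (S0 * U0)) \<le> Lam * frob Dl"
  proof -
    have "transpose_mat S0 = S0" unfolding S0_def using U0 M0 M0t by (simp add: mat_dim_simps)
    hence "transpose_mat (transpose_mat Dl * (S0 * U0)) = transpose_mat U0 * (S0 * Dl)"
      using carrier_matD[OF Dlc] carrier_matD[OF S0c] carrier_matD[OF U0] by (simp add: mat_dim_simps)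
    hence "frob (transpose_mat Dl * (S0 * U0)) = frob (transpose_mat U0 * (S0 * Dl))"
      using frob_transpose[of "transpose_mat Dl * (S0 * U0)" r r] Dlc S0c U0 by simp
    thus ?thesis using frob_transpose_isometry_mult_le[OF U0 UU0, of "S0 * Dl" r] S0Dl S0c Dlc by simp
  qed
  have "frob (M - M0) \<le> frob (transpose_mat U * (D * U)) + frob (transpose_mat U * (S0 * Dl))
      + frob (transpose_mat Dl * (S0 * U0))"
    unfolding core_diff_decomposition[OF U UU U0 UU0 M M0] S0_def[symmetric] D_def[symmetric] Dl_def[symmetric]
    using frob_add_le[of "transpose_mat U * (D * U)" r r "transpose_mat U * (S0 * Dl)"]
      frob_add_le[of "transpose_mat U * (D * U) + transpose_mat U * (S0 * Dl)" r r
        "transpose_mat Dl * (S0 * U0)"] U Dc S0c Dlc U0 by simp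
  thus ?thesis using b1 b2 b3 unfolding D_def S0_def Dl_def by linarith
qed

section \<open>The Cayley parameterization\<close>

lemma unit_mat_of_quadratic_form_nonzero: assumes S: "(S::real mat) \<in> carrier_mat n n"
  and pd: "\<And>v. v \<in> carrier_vec n \<Longrightarrow> v \<noteq> 0\<^sub>v n \<Longrightarrow> v \<bullet> (S *\<^sub>v v) \<noteq> 0"
  shows "S \<in> Units (ring_mat TYPE(real) n ())"
proof -
  have "det S \<noteq> 0"
  proof
    assume "det S = 0"
    then obtain v where v: "v \<in> carrier_vec n" "v \<noteq> 0\<^sub>v n" "S *\<^sub>v v = 0\<^sub>v n"
      using det_0_iff_vec_prod_zero[OF S] by auto
    have "v \<bullet> (S *\<^sub>v v) = 0" using v by simp
    with pd[OF v(1,2)] show False by simp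
  qed
  thus ?thesis by (rule det_non_zero_imp_unit[OF S])
qed

lemma mat_inverse_the: assumes S: "(S::real mat) \<in> carrier_mat n n"
  and U: "S \<in> Units (ring_mat TYPE(real) n ())"
  shows "S * the (mat_inverse S) = 1\<^sub>m n" "the (mat_inverse S) * S = 1\<^sub>m n"
    "the (mat_inverse S) \<in> carrier_mat n n"
proof -
  have "mat_inverse S \<noteq> None" using mat_inverse(1)[OF S, of "()"] U by auto
  then obtain T where T: "mat_inverse S = Some T" by auto
  from mat_inverse(2)[OF S T] T
  show "S * the (mat_inverse S) = 1\<^sub>m n" "the (mat_inverse S) * S = 1\<^sub>m n"
    "the (mat_inverse S) \<in> carrier_mat n n" by auto
qed

text \<open>\<open>Jpr p r = [0; 1]\<close> (with a \<open>(p - r) \<times> (p - r)\<close> identity block) complements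
  \<open>Ipr p r = [1; 0]\<close>: the top and bottom blocks of a \<open>p \<times> r\<close> matrix \<open>U\<close> are
  \<open>(Ipr p r)\<^sup>T U\<close> and \<open>(Jpr p r)\<^sup>T U\<close>.\<close>

definition Jpr :: "nat \<Rightarrow> nat \<Rightarrow> real mat" where
  "Jpr p r = mat p (p - r) (\<lambda>(i,j). if i = j + r then 1 else 0)"

lemma if_one_zero_mult[simp]: "(if P then 1 else 0) * (x::real) = (if P then x else 0)"
  "x * (if P then 1 else 0) = (if P then x else 0)" by auto

lemma sum_shift_delta: fixes i r n :: nat shows
  "(\<Sum>k = 0..<n. if i = k + r then (f k::real) else 0) = (if r \<le> i \<and> i - r < n then f (i - r) else 0)"
proof -
  have "(\<Sum>k = 0..<n. if i = k + r then (f k::real) else 0) = (\<Sum>k = 0..<n. if k = i - r then (if r \<le> i then f k else 0) else 0)"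
    by (intro sum.cong) auto
  also have "\<dots> = (if r \<le> i \<and> i - r < n then f (i - r) else 0)" by (subst sum.delta) auto
  finally show ?thesis .
qed

lemma Ipr_carrier[simp]: "Ipr p r \<in> carrier_mat p r" unfolding Ipr_def by simp

lemma Jpr_carrier[simp]: "Jpr p r \<in> carrier_mat p (p - r)" unfolding Jpr_def by simp

lemma frame_mult_carrier[simp]:
  "B \<in> carrier_mat r m \<Longrightarrow> Ipr p r * B \<in> carrier_mat p m"
  "C \<in> carrier_mat (p - r) m \<Longrightarrow> Jpr p r * C \<in> carrier_mat p m"
  "Y \<in> carrier_mat p m \<Longrightarrow> transpose_mat (Ipr p r) * Y \<in> carrier_mat r m"
  "Y \<in> carrier_mat p m \<Longrightarrow> transpose_mat (Jpr p r) * Y \<in> carrier_mat (p - r) m"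
  by (auto intro: mult_carrier_mat[OF Ipr_carrier] mult_carrier_mat[OF Jpr_carrier]
      mult_carrier_mat[OF transpose_carrier_mat[THEN iffD2, OF Ipr_carrier]]
      mult_carrier_mat[OF transpose_carrier_mat[THEN iffD2, OF Jpr_carrier]])

lemma frame_dims[simp]: "dim_row (Ipr p r) = p" "dim_col (Ipr p r) = r"
  "dim_row (Jpr p r) = p" "dim_col (Jpr p r) = p - r"
  by (simp_all add: Ipr_def Jpr_def)

lemma Ipr_transpose_Ipr: assumes "r \<le> p" shows "transpose_mat (Ipr p r) * Ipr p r = 1\<^sub>m r"
  using assms by (intro eq_matI) (auto simp: Ipr_def scalar_prod_def)

lemma Jpr_transpose_Jpr: assumes "r \<le> p" shows "transpose_mat (Jpr p r) * Jpr p r = 1\<^sub>m (p - r)"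
  using assms by (intro eq_matI) (auto simp: Jpr_def scalar_prod_def sum_shift_delta)

lemma Ipr_transpose_Jpr: assumes "r \<le> p" shows "transpose_mat (Ipr p r) * Jpr p r = 0\<^sub>m r (p - r)"
  using assms by (intro eq_matI) (auto simp: Jpr_def Ipr_def scalar_prod_def)

lemma Jpr_transpose_Ipr: assumes "r \<le> p" shows "transpose_mat (Jpr p r) * Ipr p r = 0\<^sub>m (p - r) r"
  using assms by (intro eq_matI) (auto simp: Jpr_def Ipr_def scalar_prod_def sum_shift_delta)

lemma Jpr_mult: assumes "r \<le> p" "A \<in> carrier_mat (p - r) r"
  shows "Jpr p r * A = mat p r (\<lambda>(i,j). if r \<le> i then A $$ (i - r, j) else 0)"
  using assms by (intro eq_matI) (auto simp: Jpr_def scalar_prod_def sum_shift_delta)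

lemma Ipr_mult_transpose: assumes "r \<le> p" "A \<in> carrier_mat (p - r) r"
  shows "Ipr p r * transpose_mat A = mat p (p - r) (\<lambda>(i,j). if i < r then A $$ (j, i) else 0)"
  using assms by (intro eq_matI) (auto simp: Ipr_def scalar_prod_def)

lemma Xmat_eq_blocks: assumes "r \<le> p" "A \<in> carrier_mat (p - r) r"
  shows "Xmat p r A = Jpr p r * A * transpose_mat (Ipr p r) - Ipr p r * transpose_mat A * transpose_mat (Jpr p r)"
  using assms unfolding Jpr_mult[OF assms] Ipr_mult_transpose[OF assms]
  by (intro eq_matI) (auto simp: Xmat_def Jpr_def Ipr_def scalar_prod_def sum_shift_delta)

lemma transpose_Xmat: assumes "A \<in> carrier_mat (p - r) r" "r \<le> p"
  shows "transpose_mat (Xmat p r A) = - Xmat p r (A::real mat)"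
  using assms by (intro eq_matI) (auto simp: Xmat_def)

lemma Xmat_carrier: "A \<in> carrier_mat (p - r) r \<Longrightarrow> r \<le> p \<Longrightarrow> Xmat p r A \<in> carrier_mat p p"
  unfolding Xmat_def by (auto intro!: four_block_carrier_mat[of _ r r _ "p - r" "p - r", simplified])

lemma unit_one_plus_transpose_mult:
  assumes A: "A \<in> carrier_mat m n"
  shows "1\<^sub>m n + transpose_mat A * A \<in> Units (ring_mat TYPE(real) n ())"
proof (rule unit_mat_of_quadratic_form_nonzero)
  fix v :: "real vec" assume v: "v \<in> carrier_vec n" "v \<noteq> 0\<^sub>v n"
  have "v \<bullet> ((1\<^sub>m n + transpose_mat A * A) *\<^sub>v v) = v \<bullet> v + v \<bullet> (transpose_mat A *\<^sub>v (A *\<^sub>v v))"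
    using A v by (simp add: add_mult_distrib_mat_vec[of _ n n] scalar_prod_add_distrib[of _ n])
  also have "v \<bullet> (transpose_mat A *\<^sub>v (A *\<^sub>v v)) = (A *\<^sub>v v) \<bullet> (A *\<^sub>v v)"
    using scalar_prod_mult_mat_vec_transpose[OF A v(1), of "A *\<^sub>v v"] A v by simp
  finally show "v \<bullet> ((1\<^sub>m n + transpose_mat A * A) *\<^sub>v v) \<noteq> 0"
    using normalize_vec(3)[OF v] scalar_prod_self_nonneg[of "A *\<^sub>v v"]
    unfolding vnorm_eq_sqrt_scalar_prod by simp
qed (use A in simp)

lemma unit_one_minus_skew:
  assumes X: "X \<in> carrier_mat n n" and sk: "transpose_mat X = - X"
  shows "1\<^sub>m n - X \<in> Units (ring_mat TYPE(real) n ())"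
proof (rule unit_mat_of_quadratic_form_nonzero)
  fix v :: "real vec" assume v: "v \<in> carrier_vec n" "v \<noteq> 0\<^sub>v n"
  have "v \<bullet> ((1\<^sub>m n - X) *\<^sub>v v) = v \<bullet> v - v \<bullet> (X *\<^sub>v v)"
    using v X by (simp add: minus_mult_distrib_mat_vec[of _ n n] scalar_prod_minus_distrib[of _ n])
  also have "v \<bullet> (X *\<^sub>v v) = 0" by (rule scalar_prod_skew_mult_eq_0[OF X sk v(1)])
  finally show "v \<bullet> ((1\<^sub>m n - X) *\<^sub>v v) \<noteq> 0"
    using normalize_vec(3)[OF v] unfolding vnorm_eq_sqrt_scalar_prod by simp
qed (use X in simp)

lemma cayley_top_block_ineq: fixes a Y s t :: real
  assumes "s \<le> a^2 * Y" "t \<le> a^2 * s"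
  shows "(1 - a^2) / (1 + a^2) * (Y + 2 * s + t) \<le> Y - t"
proof -
  have "(1 + a^2) * (Y - t) - (1 - a^2) * (Y + 2 * s + t) = 2 * (a^2 * Y - s) + 2 * (a^2 * s - t)"
    by (simp add: algebra_simps)
  hence "(1 - a^2) * (Y + 2 * s + t) \<le> (1 + a^2) * (Y - t)" using assms by simp
  moreover have "1 + a^2 > 0" by (simp add: add_pos_nonneg)
  ultimately show ?thesis by (simp add: divide_simps mult.commute)
qed

lemma frame_transpose_mult_left:
  assumes rp: "r \<le> p"
  shows "dim_row Z = r \<Longrightarrow> transpose_mat (Ipr p r) * (Ipr p r * Z) = Z"
    "dim_row Z = p - r \<Longrightarrow> transpose_mat (Jpr p r) * (Jpr p r * Z) = Z"
    "dim_row Z = p - r \<Longrightarrow> transpose_mat (Ipr p r) * (Jpr p r * Z) = 0\<^sub>m r (dim_col Z)"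
    "dim_row Z = r \<Longrightarrow> transpose_mat (Jpr p r) * (Ipr p r * Z) = 0\<^sub>m (p - r) (dim_col Z)"
  using rp mat_mult_assoc[of "transpose_mat (Ipr p r)" "Ipr p r" Z]
    mat_mult_assoc[of "transpose_mat (Jpr p r)" "Jpr p r" Z]
    mat_mult_assoc[of "transpose_mat (Ipr p r)" "Jpr p r" Z]
    mat_mult_assoc[of "transpose_mat (Jpr p r)" "Ipr p r" Z]
  by (simp_all add: Ipr_transpose_Ipr Jpr_transpose_Jpr Ipr_transpose_Jpr Jpr_transpose_Ipr mat_zero_mult)

lemmas frame_transpose_mult = Ipr_transpose_Ipr Jpr_transpose_Jpr Ipr_transpose_Jpr Jpr_transpose_Ipr
  frame_transpose_mult_left

context
  fixes p r :: nat and A :: "real mat"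
  assumes rp: "r \<le> p" and A: "A \<in> carrier_mat (p - r) r"
begin

lemma gram_inverse_mult:
  assumes Z: "Z \<in> carrier_mat r r" and ZS: "(1\<^sub>m r + transpose_mat A * A) * Z = 1\<^sub>m r"
  shows "(transpose_mat A * A) * Z = 1\<^sub>m r - Z"
proof -
  have "1\<^sub>m r = Z + (transpose_mat A * A) * Z" using ZS Z A by (simp add: mat_dim_simps)
  thus ?thesis using Z A by (intro eq_matI) auto
qed

lemma gram_inverse_mult_vec:
  assumes Z: "Z \<in> carrier_mat r r" and BZ: "(transpose_mat A * A) * Z = 1\<^sub>m r - Z"
    and x: "x \<in> carrier_vec r"
  shows "transpose_mat A *\<^sub>v (A *\<^sub>v (Z *\<^sub>v x)) = x - Z *\<^sub>v x"
proof -
  have "transpose_mat A *\<^sub>v (A *\<^sub>v (Z *\<^sub>v x)) = (transpose_mat A * A) *\<^sub>v (Z *\<^sub>v x)"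
    by (rule assoc_mult_mat_vec[symmetric, of _ r "p - r" _ r]) (use A Z x in auto)
  also have "\<dots> = ((transpose_mat A * A) * Z) *\<^sub>v x"
    by (rule assoc_mult_mat_vec[symmetric, of _ r r _ r]) (use A Z x in auto)
  finally show ?thesis unfolding BZ using Z x by (simp add: minus_mult_distrib_mat_vec[of _ r r])
qed

context
  fixes Z :: "real mat"
  assumes Z: "Z \<in> carrier_mat r r" and BZ: "(transpose_mat A * A) * Z = 1\<^sub>m r - Z"
begin

lemma Xmat_mult_frame: "Xmat p r A * (Ipr p r * Z + Jpr p r * (A * Z)) = Jpr p r * (A * Z) - (Ipr p r - Ipr p r * Z)"
proof -
  have "Xmat p r A * (Ipr p r * Z + Jpr p r * (A * Z)) = Jpr p r * (A * Z) - Ipr p r * ((transpose_mat A * A) * Z)"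
    unfolding Xmat_eq_blocks[OF rp A] using carrier_matD[OF Z]
    by (simp add: mat_dim_simps carrier_matD[OF A] frame_transpose_mult[OF rp])
  also have "Ipr p r * ((transpose_mat A * A) * Z) = Ipr p r - Ipr p r * Z"
    unfolding BZ using carrier_matD[OF Z] by (simp add: mat_dim_simps)
  finally show ?thesis .
qed

lemma one_minus_Xmat_mult_frame: "(1\<^sub>m p - Xmat p r A) * (Ipr p r * Z + Jpr p r * (A * Z)) = Ipr p r"
proof -
  have "(1\<^sub>m p - Xmat p r A) * (Ipr p r * Z + Jpr p r * (A * Z))
      = (Ipr p r * Z + Jpr p r * (A * Z)) - Xmat p r A * (Ipr p r * Z + Jpr p r * (A * Z))"
    using minus_mult_distrib_mat[OF one_carrier_mat Xmat_carrier[OF A rp], of "Ipr p r * Z + Jpr p r * (A * Z)" r] Z A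
    by simp
  thus ?thesis unfolding Xmat_mult_frame using Z A by (intro eq_matI) auto
qed

lemma one_plus_Xmat_mult_frame:
  "(1\<^sub>m p + Xmat p r A) * (Ipr p r * Z + Jpr p r * (A * Z)) = Ipr p r * (2 \<cdot>\<^sub>m Z - 1\<^sub>m r) + Jpr p r * (2 \<cdot>\<^sub>m (A * Z))"
proof -
  have "(1\<^sub>m p + Xmat p r A) * (Ipr p r * Z + Jpr p r * (A * Z))
      = (Ipr p r * Z + Jpr p r * (A * Z)) + Xmat p r A * (Ipr p r * Z + Jpr p r * (A * Z))"
    using add_mult_distrib_mat[OF one_carrier_mat Xmat_carrier[OF A rp], of "Ipr p r * Z + Jpr p r * (A * Z)" r] Z A
    by simp
  also have "\<dots> = 2 \<cdot>\<^sub>m (Ipr p r * Z) - Ipr p r + 2 \<cdot>\<^sub>m (Jpr p r * (A * Z))"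
    unfolding Xmat_mult_frame using Z A by (intro eq_matI) auto
  also have "\<dots> = Ipr p r * (2 \<cdot>\<^sub>m Z - 1\<^sub>m r) + Jpr p r * (2 \<cdot>\<^sub>m (A * Z))"
    using carrier_matD[OF Z] carrier_matD[OF A] by (simp add: mat_dim_simps)
  finally show ?thesis .
qed

end

text \<open>With \<open>Z = (1 + A\<^sup>T A)\<inverse>\<close>, \<open>I = Ipr p r\<close>, \<open>J = Jpr p r\<close> and \<open>W = I Z + J A Z\<close> one has
  \<open>(1 - X) W = I\<close>, so \<open>(1 - X)\<inverse> I = W\<close> and the Cayley frame is \<open>(1 + X) W\<close>.\<close>

lemma Ucay_eq_blocks:
  obtains Z where "Z \<in> carrier_mat r r" "(1\<^sub>m r + transpose_mat A * A) * Z = 1\<^sub>m r"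
    "Z * (1\<^sub>m r + transpose_mat A * A) = 1\<^sub>m r"
    "Ucay p r A = Ipr p r * (2 \<cdot>\<^sub>m Z - 1\<^sub>m r) + Jpr p r * (2 \<cdot>\<^sub>m (A * Z))"
proof -
  obtain Z where Z: "Z \<in> carrier_mat r r" "(1\<^sub>m r + transpose_mat A * A) * Z = 1\<^sub>m r"
    "Z * (1\<^sub>m r + transpose_mat A * A) = 1\<^sub>m r"
    using unit_one_plus_transpose_mult[OF A] unfolding Units_def ring_mat_def by auto
  note BZ = gram_inverse_mult[OF Z(1,2)]
  define W where "W = Ipr p r * Z + Jpr p r * (A * Z)"
  have Wc: "W \<in> carrier_mat p r" unfolding W_def using A Z(1) by simp
  have Xc: "Xmat p r A \<in> carrier_mat p p" by (rule Xmat_carrier[OF A rp])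
  define T where "T = the (mat_inverse (1\<^sub>m p - Xmat p r A))"
  have T: "T * (1\<^sub>m p - Xmat p r A) = 1\<^sub>m p" "T \<in> carrier_mat p p"
    using mat_inverse_the[OF _ unit_one_minus_skew[OF Xc transpose_Xmat[OF A rp]]] Xc
    unfolding T_def by auto
  have "T * Ipr p r = T * ((1\<^sub>m p - Xmat p r A) * W)"
    unfolding W_def one_minus_Xmat_mult_frame[OF Z(1) BZ] ..
  also have "\<dots> = (T * (1\<^sub>m p - Xmat p r A)) * W"
    by (rule mat_mult_assoc[symmetric]) (use T(2) Xc Wc in auto)
  finally have TIr: "T * Ipr p r = W" unfolding T(1) using Wc by simp
  have "Ucay p r A = (1\<^sub>m p + Xmat p r A) * W"
    unfolding Ucay_def T_def[symmetric] TIr[symmetric] using T(2) Xc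
    by (simp add: mat_dim_simps carrier_matD[OF A])
  thus ?thesis using that Z unfolding W_def one_plus_Xmat_mult_frame[OF Z(1) BZ] by blast
qed

lemma Ucay_blocks:
  obtains Z where "Z \<in> carrier_mat r r" "transpose_mat Z = Z"
    "Z * (1\<^sub>m r + transpose_mat A * A) = 1\<^sub>m r" "(transpose_mat A * A) * Z = 1\<^sub>m r - Z"
    "Ucay p r A = Ipr p r * (2 \<cdot>\<^sub>m Z - 1\<^sub>m r) + Jpr p r * (2 \<cdot>\<^sub>m (A * Z))"
    "transpose_mat (Ipr p r) * Ucay p r A = 2 \<cdot>\<^sub>m Z - 1\<^sub>m r"
    "transpose_mat (Jpr p r) * Ucay p r A = 2 \<cdot>\<^sub>m (A * Z)"
proof -
  obtain Z where Z: "Z \<in> carrier_mat r r" "(1\<^sub>m r + transpose_mat A * A) * Z = 1\<^sub>m r"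
    "Z * (1\<^sub>m r + transpose_mat A * A) = 1\<^sub>m r"
    and U: "Ucay p r A = Ipr p r * (2 \<cdot>\<^sub>m Z - 1\<^sub>m r) + Jpr p r * (2 \<cdot>\<^sub>m (A * Z))"
    by (rule Ucay_eq_blocks)
  define S where "S = 1\<^sub>m r + transpose_mat A * A"
  have Sc: "S \<in> carrier_mat r r" unfolding S_def using A by simp
  note dZ = carrier_matD[OF Z(1)] and dA = carrier_matD[OF A] and dS = carrier_matD[OF Sc]
  have St: "transpose_mat S = S" unfolding S_def using dA by (simp add: mat_dim_simps)
  have "transpose_mat Z = (Z * S) * transpose_mat Z" using Z(3) dZ unfolding S_def by simp
  also have "\<dots> = Z * transpose_mat (Z * S)" using St dZ dS by (simp add: mat_dim_simps)
  finally have Zt: "transpose_mat Z = Z" using Z(3) dZ unfolding S_def by simp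
  note BZ = gram_inverse_mult[OF Z(1,2)]
  have "transpose_mat (Ipr p r) * Ucay p r A = 2 \<cdot>\<^sub>m Z - 1\<^sub>m r" "transpose_mat (Jpr p r) * Ucay p r A = 2 \<cdot>\<^sub>m (A * Z)"
    unfolding U using dZ dA by (simp_all add: mat_dim_simps carrier_matD[OF A] frame_transpose_mult[OF rp])
  with Z Zt BZ U that show ?thesis by blast
qed

lemma Ucay_carrier: "Ucay p r A \<in> carrier_mat p r"
proof -
  obtain Z where "Z \<in> carrier_mat r r" "Ucay p r A = Ipr p r * (2 \<cdot>\<^sub>m Z - 1\<^sub>m r) + Jpr p r * (2 \<cdot>\<^sub>m (A * Z))"
    by (rule Ucay_blocks)
  thus ?thesis using A by simp
qed

lemma Ucay_isometry: "transpose_mat (Ucay p r A) * Ucay p r A = 1\<^sub>m r"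
proof -
  obtain Z where Z: "Z \<in> carrier_mat r r" "transpose_mat Z = Z" "(transpose_mat A * A) * Z = 1\<^sub>m r - Z"
    and U: "Ucay p r A = Ipr p r * (2 \<cdot>\<^sub>m Z - 1\<^sub>m r) + Jpr p r * (2 \<cdot>\<^sub>m (A * Z))"
    by (rule Ucay_blocks)
  define U1 where "U1 = 2 \<cdot>\<^sub>m Z - 1\<^sub>m r"
  note dZ = carrier_matD[OF Z(1)] and dA = carrier_matD[OF A]
  have "transpose_mat (Ucay p r A) * Ucay p r A
      = transpose_mat U1 * U1 + transpose_mat (2 \<cdot>\<^sub>m (A * Z)) * (2 \<cdot>\<^sub>m (A * Z))"
    unfolding U U1_def using dZ dA by (simp add: mat_dim_simps carrier_matD[OF A] frame_transpose_mult[OF rp])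
  also have "transpose_mat (2 \<cdot>\<^sub>m (A * Z)) * (2 \<cdot>\<^sub>m (A * Z)) = 4 \<cdot>\<^sub>m Z - 4 \<cdot>\<^sub>m (Z * Z)"
  proof -
    have "transpose_mat (2 \<cdot>\<^sub>m (A * Z)) * (2 \<cdot>\<^sub>m (A * Z)) = 4 \<cdot>\<^sub>m (Z * ((transpose_mat A * A) * Z))"
      using dZ dA Z(2) by (simp add: mat_dim_simps)
    thus ?thesis unfolding Z(3) using dZ by (simp add: mat_dim_simps)
  qed
  also have "transpose_mat U1 * U1 = 4 \<cdot>\<^sub>m (Z * Z) - 4 \<cdot>\<^sub>m Z + 1\<^sub>m r"
    unfolding U1_def using dZ Z(2) by (simp add: mat_dim_simps) (intro eq_matI; auto simp: algebra_simps)
  also have "(4 \<cdot>\<^sub>m (Z * Z) - 4 \<cdot>\<^sub>m Z + 1\<^sub>m r) + (4 \<cdot>\<^sub>m Z - 4 \<cdot>\<^sub>m (Z * Z)) = 1\<^sub>m r"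
    using dZ by (intro eq_matI) auto
  finally show ?thesis .
qed

lemma Ucay_top_symmetric:
  "transpose_mat (transpose_mat (Ipr p r) * Ucay p r A) = transpose_mat (Ipr p r) * Ucay p r A"
proof -
  obtain Z where "Z \<in> carrier_mat r r" "transpose_mat Z = Z"
    "transpose_mat (Ipr p r) * Ucay p r A = 2 \<cdot>\<^sub>m Z - 1\<^sub>m r"
    by (rule Ucay_blocks)
  thus ?thesis by (simp add: mat_dim_simps)
qed

lemma Ucay_bottom: "transpose_mat (Jpr p r) * Ucay p r A = A * (1\<^sub>m r + transpose_mat (Ipr p r) * Ucay p r A)"
proof -
  obtain Z where Z: "Z \<in> carrier_mat r r" "transpose_mat (Ipr p r) * Ucay p r A = 2 \<cdot>\<^sub>m Z - 1\<^sub>m r"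
    "transpose_mat (Jpr p r) * Ucay p r A = 2 \<cdot>\<^sub>m (A * Z)"
    by (rule Ucay_blocks)
  have "1\<^sub>m r + (2 \<cdot>\<^sub>m Z - 1\<^sub>m r) = 2 \<cdot>\<^sub>m Z" using Z(1) by (intro eq_matI) auto
  thus ?thesis unfolding Z(2,3) using Z(1) A by (simp add: mat_dim_simps)
qed

lemma Ucay_top_inverse:
  "(1\<^sub>m r + transpose_mat (Ipr p r) * Ucay p r A) * (1\<^sub>m r + transpose_mat A * A) = 2 \<cdot>\<^sub>m 1\<^sub>m r"
proof -
  obtain Z where Z: "Z \<in> carrier_mat r r" "Z * (1\<^sub>m r + transpose_mat A * A) = 1\<^sub>m r"
    "transpose_mat (Ipr p r) * Ucay p r A = 2 \<cdot>\<^sub>m Z - 1\<^sub>m r"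
    by (rule Ucay_blocks)
  have "1\<^sub>m r + (2 \<cdot>\<^sub>m Z - 1\<^sub>m r) = 2 \<cdot>\<^sub>m Z" using Z(1) by (intro eq_matI) auto
  thus ?thesis unfolding Z(3) using Z(1,2) A by (simp add: mat_smult_mult_assoc)
qed

text \<open>For \<open>x = (1 + A\<^sup>T A) y\<close> the quadratic form of the top block \<open>2Z - 1\<close> is
  \<open>|y|\<^sup>2 - |A\<^sup>T A y|\<^sup>2\<close>, while \<open>|x|\<^sup>2 = |y|\<^sup>2 + 2|A y|\<^sup>2 + |A\<^sup>T A y|\<^sup>2\<close>.\<close>

lemma Ucay_top_ge:
  assumes r1: "1 \<le> r" and x: "x \<in> carrier_vec r"
  shows "(1 - (spec_norm A)^2) / (1 + (spec_norm A)^2) * (x \<bullet> x)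
    \<le> ((transpose_mat (Ipr p r) * Ucay p r A) *\<^sub>v x) \<bullet> x"
proof -
  obtain Z where Z: "Z \<in> carrier_mat r r" "(transpose_mat A * A) * Z = 1\<^sub>m r - Z"
    "transpose_mat (Ipr p r) * Ucay p r A = 2 \<cdot>\<^sub>m Z - 1\<^sub>m r"
    by (rule Ucay_blocks)
  define a where "a = spec_norm A"
  have a0: "a \<ge> 0" unfolding a_def by (rule spec_norm_nonneg[OF A r1])
  define y where "y = Z *\<^sub>v x"
  define Ay where "Ay = A *\<^sub>v y"
  define By where "By = transpose_mat A *\<^sub>v Ay"
  have y: "y \<in> carrier_vec r" unfolding y_def using Z(1) x by simp
  have Ayc: "Ay \<in> carrier_vec (p - r)" unfolding Ay_def using A y by simp
  have Byc: "By \<in> carrier_vec r" unfolding By_def using A Ayc by simp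
  have "By = x - y" unfolding By_def Ay_def y_def by (rule gram_inverse_mult_vec[OF Z(1,2) x])
  hence xe: "x = y + By" using x y Byc by auto
  have yBy: "y \<bullet> By = Ay \<bullet> Ay" unfolding By_def Ay_def
    using scalar_prod_mult_mat_vec_transpose[OF A y, of "A *\<^sub>v y"] A y by simp
  have U1x: "(2 \<cdot>\<^sub>m Z - 1\<^sub>m r) *\<^sub>v x = 2 \<cdot>\<^sub>v y - x" unfolding y_def using Z(1) x
    by (simp add: minus_mult_distrib_mat_vec[of _ r r] smult_mat_mult_vec[of _ r r])
  have e1: "((2 \<cdot>\<^sub>m Z - 1\<^sub>m r) *\<^sub>v x) \<bullet> x = y \<bullet> y - By \<bullet> By"
    unfolding U1x unfolding xe using y Byc
    by (simp add: minus_scalar_prod_distrib[of _ r] add_scalar_prod_distrib[of _ r]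
        scalar_prod_add_distrib[of _ r] comm_scalar_prod[of By r y] yBy algebra_simps)
  have e2: "x \<bullet> x = y \<bullet> y + 2 * (Ay \<bullet> Ay) + By \<bullet> By"
    unfolding xe using y Byc
    by (simp add: add_scalar_prod_distrib[of _ r] scalar_prod_add_distrib[of _ r]
        comm_scalar_prod[of By r y] yBy algebra_simps)
  have "Ay \<bullet> Ay \<le> a^2 * (y \<bullet> y)" unfolding Ay_def a_def
    by (rule scalar_prod_self_le_of_vnorm_le[OF vnorm_mult_le_spec_norm[OF A y] spec_norm_nonneg[OF A r1]])
  moreover have "By \<bullet> By \<le> a^2 * (Ay \<bullet> Ay)" unfolding By_def
    by (rule scalar_prod_self_le_of_vnorm_le[OF vnorm_transpose_mult_le[OF A a0 _ Ayc] a0])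
      (use vnorm_mult_le_spec_norm[OF A] in \<open>auto simp: a_def\<close>)
  ultimately show ?thesis unfolding Z(3) e1 e2 a_def[symmetric] by (rule cayley_top_block_ineq)
qed

lemma Ucay_top_nonneg:
  assumes r1: "1 \<le> r" and a: "spec_norm A < 1" and v: "v \<in> carrier_vec r"
  shows "0 \<le> ((transpose_mat (Ipr p r) * Ucay p r A) *\<^sub>v v) \<bullet> v"
proof -
  have "0 \<le> (1 - (spec_norm A)^2) / (1 + (spec_norm A)^2)"
    using a spec_norm_nonneg[OF A r1] by (simp add: abs_square_le_1 add_pos_nonneg)
  thus ?thesis using Ucay_top_ge[OF r1 v] scalar_prod_self_nonneg[of v] by (meson mult_nonneg_nonneg order_trans)
qed

end

lemma vnorm_half_one_plus_gram_mult_le: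
  assumes A: "A \<in> carrier_mat m n" and n: "n \<ge> 1" and a: "spec_norm A \<le> 1"
    and v: "v \<in> carrier_vec n"
  shows "vnorm (((1/2) \<cdot>\<^sub>m (1\<^sub>m n + transpose_mat A * A)) *\<^sub>v v) \<le> 1 * vnorm v"
proof -
  define a where "a = spec_norm A"
  have a0: "a \<ge> 0" unfolding a_def by (rule spec_norm_nonneg[OF A n])
  have Av: "A *\<^sub>v v \<in> carrier_vec m" using A v by simp
  have "(1\<^sub>m n + transpose_mat A * A) *\<^sub>v v = v + transpose_mat A *\<^sub>v (A *\<^sub>v v)"
    using A v by (simp add: add_mult_distrib_mat_vec[of _ n n])
  hence "vnorm ((1\<^sub>m n + transpose_mat A * A) *\<^sub>v v) \<le> vnorm v + vnorm (transpose_mat A *\<^sub>v (A *\<^sub>v v))"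
    using vnorm_add[of v n "transpose_mat A *\<^sub>v (A *\<^sub>v v)"] v A by simp
  also have "vnorm (transpose_mat A *\<^sub>v (A *\<^sub>v v)) \<le> a * vnorm (A *\<^sub>v v)"
    unfolding a_def using vnorm_transpose_mult_le[OF A a0[unfolded a_def] vnorm_mult_le_spec_norm[OF A] Av] .
  also have "\<dots> \<le> a * (a * vnorm v)"
    unfolding a_def using vnorm_mult_le_spec_norm[OF A v] a0[unfolded a_def] by (intro mult_left_mono) auto
  also have "\<dots> \<le> vnorm v"
    using a0 a[folded a_def] vnorm_nonneg[of v] mult_le_one[of a a]
    by (simp add: mult.assoc[symmetric] mult_left_le_one_le)
  finally have "vnorm ((1\<^sub>m n + transpose_mat A * A) *\<^sub>v v) \<le> 2 * vnorm v" by simp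
  thus ?thesis using A v by (simp add: smult_mat_mult_vec[of _ n n] vnorm_smult)
qed

text \<open>Multiply \<open>J\<^sup>T U(A) = A (1 + T)\<close>, \<open>T = I\<^sup>T U(A)\<close>, by \<open>1 + A\<^sup>T A\<close>, using
  \<open>(1 + T) (1 + A\<^sup>T A) = 2\<close>, and likewise for \<open>A0\<close>.\<close>

lemma Ucay_param_diff_eq:
  assumes rp: "r \<le> p" and A: "A \<in> carrier_mat (p - r) r" and A0: "A0 \<in> carrier_mat (p - r) r"
  defines "Dl \<equiv> Ucay p r A - Ucay p r A0"
  shows "A - A0 = (transpose_mat (Jpr p r) * Dl - A0 * (transpose_mat (Ipr p r) * Dl))
    * ((1/2) \<cdot>\<^sub>m (1\<^sub>m r + transpose_mat A * A))"
proof -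
  define T where "T = transpose_mat (Ipr p r) * Ucay p r A"
  define T0 where "T0 = transpose_mat (Ipr p r) * Ucay p r A0"
  define Sm where "Sm = 1\<^sub>m r + transpose_mat A * A"
  define G where "G = transpose_mat (Jpr p r) * Dl - A0 * (transpose_mat (Ipr p r) * Dl)"
  have Uc: "Ucay p r A \<in> carrier_mat p r" "Ucay p r A0 \<in> carrier_mat p r"
    using Ucay_carrier[OF rp A] Ucay_carrier[OF rp A0] by auto
  have Dlc: "Dl \<in> carrier_mat p r" unfolding Dl_def using Uc by simp
  have Smc: "Sm \<in> carrier_mat r r" unfolding Sm_def using A by simp
  have Gc: "G \<in> carrier_mat (p - r) r" unfolding G_def using A0 Dlc by simp
  have Tc: "T \<in> carrier_mat r r" "T0 \<in> carrier_mat r r" unfolding T_def T0_def using Uc by auto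
  have JUc: "transpose_mat (Jpr p r) * Ucay p r A \<in> carrier_mat (p - r) r" using Uc by simp
  note dA0 = carrier_matD[OF A0] and dT = carrier_matD[OF Tc(1)] and dSm = carrier_matD[OF Smc]
  have JU0: "transpose_mat (Jpr p r) * Ucay p r A0 = A0 + A0 * T0"
    unfolding Ucay_bottom[OF rp A0] T0_def[symmetric] using dA0 Tc(2) by (simp add: mat_dim_simps)
  have "G = transpose_mat (Jpr p r) * Ucay p r A - transpose_mat (Jpr p r) * Ucay p r A0
      - (A0 * T - A0 * T0)"
    unfolding G_def Dl_def T_def T0_def using Uc dA0 by (simp add: mat_dim_simps)
  moreover have "A0 * (1\<^sub>m r + T) = A0 + A0 * T" using dA0 dT by (simp add: mat_dim_simps)
  ultimately have Ge: "G = transpose_mat (Jpr p r) * Ucay p r A - A0 * (1\<^sub>m r + T)"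
    unfolding JU0 using A0 Tc JUc by (intro eq_matI) auto
  have TSm: "(1\<^sub>m r + T) * Sm = 2 \<cdot>\<^sub>m 1\<^sub>m r" unfolding T_def Sm_def by (rule Ucay_top_inverse[OF rp A])
  have "G * Sm = (transpose_mat (Jpr p r) * Ucay p r A) * Sm - A0 * ((1\<^sub>m r + T) * Sm)"
    unfolding Ge using carrier_matD[OF JUc] dA0 dT dSm by (simp add: mat_minus_mult_distrib mat_mult_assoc)
  also have "(transpose_mat (Jpr p r) * Ucay p r A) * Sm = A * ((1\<^sub>m r + T) * Sm)"
    unfolding Ucay_bottom[OF rp A] T_def[symmetric] using A Tc(1) Smc by (simp add: mat_mult_assoc)
  finally have "G * Sm = 2 \<cdot>\<^sub>m A - 2 \<cdot>\<^sub>m A0" unfolding TSm using A A0 by (simp add: mat_dim_simps)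
  moreover have "G * ((1/2) \<cdot>\<^sub>m Sm) = (1/2) \<cdot>\<^sub>m (G * Sm)" using Gc Smc by (simp add: mat_dim_simps)
  ultimately show ?thesis unfolding G_def[symmetric] Sm_def[symmetric] using A A0 by (intro eq_matI) auto
qed

lemma frob_Ucay_param_diff_le:
  assumes r1: "1 \<le> r" and rp: "r \<le> p"
    and A: "A \<in> carrier_mat (p - r) r" and A0: "A0 \<in> carrier_mat (p - r) r"
    and a: "spec_norm A \<le> 1" and a0: "spec_norm A0 \<le> 1"
  shows "frob (A - A0) \<le> 2 * frob (Ucay p r A - Ucay p r A0)"
proof -
  define Dl where "Dl = Ucay p r A - Ucay p r A0"
  define Sm where "Sm = 1\<^sub>m r + transpose_mat A * A"
  define G where "G = transpose_mat (Jpr p r) * Dl - A0 * (transpose_mat (Ipr p r) * Dl)"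
  have Dlc: "Dl \<in> carrier_mat p r" unfolding Dl_def using Ucay_carrier[OF rp A] Ucay_carrier[OF rp A0] by simp
  have Gc: "G \<in> carrier_mat (p - r) r" unfolding G_def using A0 Dlc by simp
  have Smc: "Sm \<in> carrier_mat r r" unfolding Sm_def using A by simp
  have Smt: "transpose_mat ((1/2) \<cdot>\<^sub>m Sm) = (1/2) \<cdot>\<^sub>m Sm" unfolding Sm_def using A by (simp add: mat_dim_simps)
  have opSm: "\<And>v. v \<in> carrier_vec r \<Longrightarrow> vnorm (transpose_mat ((1/2) \<cdot>\<^sub>m Sm) *\<^sub>v v) \<le> 1 * vnorm v"
    unfolding Smt unfolding Sm_def by (rule vnorm_half_one_plus_gram_mult_le[OF A r1 a])
  have Ir_Dl: "frob (transpose_mat (Ipr p r) * Dl) \<le> frob Dl"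
    by (rule frob_transpose_isometry_mult_le[OF Ipr_carrier Ipr_transpose_Ipr[OF rp] Dlc])
  have J_Dl: "frob (transpose_mat (Jpr p r) * Dl) \<le> frob Dl"
    by (rule frob_transpose_isometry_mult_le[OF Jpr_carrier Jpr_transpose_Jpr[OF rp] Dlc])
  have "frob (A - A0) \<le> 1 * frob G"
    unfolding Ucay_param_diff_eq[OF rp A A0] Dl_def[symmetric] G_def[symmetric] Sm_def[symmetric]
    by (rule frob_mult_right_le[OF Gc _ _ opSm]) (use Smc in auto)
  moreover have "frob G \<le> frob (transpose_mat (Jpr p r) * Dl) + spec_norm A0 * frob (transpose_mat (Ipr p r) * Dl)"
    using frob_minus_le[of "transpose_mat (Jpr p r) * Dl" "p - r" r "A0 * (transpose_mat (Ipr p r) * Dl)"]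
      frob_mult_le[OF A0 _ spec_norm_nonneg[OF A0 r1] vnorm_mult_le_spec_norm[OF A0], of "transpose_mat (Ipr p r) * Dl" r]
      Dlc A0 unfolding G_def by simp
  moreover have "spec_norm A0 * frob (transpose_mat (Ipr p r) * Dl) \<le> frob Dl"
    using Ir_Dl a0 spec_norm_nonneg[OF A0 r1] frob_nonneg[of "transpose_mat (Ipr p r) * Dl"]
    by (meson mult_left_le_one_le order_trans)
  ultimately show ?thesis using J_Dl unfolding Dl_def by linarith
qed

section \<open>The stacked parameter vector\<close>

definition sumsq :: "real list \<Rightarrow> real" where "sumsq xs = sum_list (map (\<lambda>x. x^2) xs)"

lemma lnorm_eq_sqrt_sumsq: "lnorm xs = sqrt (sumsq xs)"
  unfolding lnorm_def sumsq_def by (simp add: sum_list_sum_nth atLeast0LessThan)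

lemma sumsq_nonneg: "sumsq xs \<ge> 0" unfolding sumsq_def by (induct xs) auto

lemma sumsq_append: "sumsq (xs @ ys) = sumsq xs + sumsq ys" unfolding sumsq_def by simp

lemma sumsq_concat: "sumsq (concat xss) = (\<Sum>xs\<leftarrow>xss. sumsq xs)"
  by (induct xss) (auto simp: sumsq_append, simp add: sumsq_def)

lemma map2_concat: assumes "\<And>j. j \<in> set L \<Longrightarrow> length (g j) = length (h j)"
  shows "map2 f (concat (map g L)) (concat (map h L)) = concat (map (\<lambda>j. map2 f (g j) (h j)) L)"
  using assms by (induct L) auto

lemma map2_map: "map2 f (map u xs) (map v xs) = map (\<lambda>i. f (u i) (v i)) xs"
  by (induct xs) auto

lemma sumsq_upt: "sumsq (map f [a..<b]) = (\<Sum>i\<in>{a..<b}. (f i)^2)"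
  unfolding sumsq_def by (simp add: interv_sum_list_conv_sum_set_nat comp_def)

lemma lnorm_param_diff_le: assumes A: "A \<in> carrier_mat n m" and A0: "A0 \<in> carrier_mat n m"
  and M: "M \<in> carrier_mat k k" and M0: "M0 \<in> carrier_mat k k"
  shows "lnorm (map2 (-) (vecm A @ vech M) (vecm A0 @ vech M0)) \<le> frob (A - A0) + frob (M - M0)"
proof -
  have l: "length (vecm A) = length (vecm A0)"
    using A A0 unfolding vecm_def by (simp add: length_concat comp_def)
  have e1: "map2 (-) (vecm A) (vecm A0) = concat (map (\<lambda>j. map (\<lambda>i. A $$ (i,j) - A0 $$ (i,j)) [0..<n]) [0..<m])"
    using A A0 unfolding vecm_def by (simp add: map2_concat map2_map)
  have e2: "map2 (-) (vech M) (vech M0) = concat (map (\<lambda>j. map (\<lambda>i. M $$ (i,j) - M0 $$ (i,j)) [j..<k]) [0..<k])"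
    using M M0 unfolding vech_def by (simp add: map2_concat map2_map)
  have s1: "sumsq (map2 (-) (vecm A) (vecm A0)) = (frob (A - A0))^2"
  proof -
    have "sumsq (map2 (-) (vecm A) (vecm A0)) = (\<Sum>j\<in>{0..<m}. \<Sum>i\<in>{0..<n}. (A $$ (i,j) - A0 $$ (i,j))^2)"
      unfolding e1 sumsq_concat by (simp add: comp_def sumsq_upt interv_sum_list_conv_sum_set_nat)
    also have "\<dots> = (\<Sum>i\<in>{0..<n}. \<Sum>j\<in>{0..<m}. (A $$ (i,j) - A0 $$ (i,j))^2)" by (rule sum.swap)
    also have "\<dots> = (frob (A - A0))^2" unfolding frob_def using A A0
      by (simp add: sum_nonneg atLeast0LessThan)
    finally show ?thesis .
  qed
  have s2: "sumsq (map2 (-) (vech M) (vech M0)) \<le> (frob (M - M0))^2"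
  proof -
    have "sumsq (map2 (-) (vech M) (vech M0)) = (\<Sum>j\<in>{0..<k}. \<Sum>i\<in>{j..<k}. (M $$ (i,j) - M0 $$ (i,j))^2)"
      unfolding e2 sumsq_concat by (simp add: comp_def sumsq_upt interv_sum_list_conv_sum_set_nat)
    also have "\<dots> \<le> (\<Sum>j\<in>{0..<k}. \<Sum>i\<in>{0..<k}. (M $$ (i,j) - M0 $$ (i,j))^2)"
      by (intro sum_mono sum_mono2) auto
    also have "\<dots> = (\<Sum>i\<in>{0..<k}. \<Sum>j\<in>{0..<k}. (M $$ (i,j) - M0 $$ (i,j))^2)" by (rule sum.swap)
    also have "\<dots> = (frob (M - M0))^2" unfolding frob_def using M M0
      by (simp add: sum_nonneg atLeast0LessThan)
    finally show ?thesis .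
  qed
  have "lnorm (map2 (-) (vecm A @ vech M) (vecm A0 @ vech M0))
      = sqrt (sumsq (map2 (-) (vecm A) (vecm A0)) + sumsq (map2 (-) (vech M) (vech M0)))"
    unfolding lnorm_eq_sqrt_sumsq using l by (simp add: sumsq_append)
  also have "\<dots> \<le> sqrt (sumsq (map2 (-) (vecm A) (vecm A0))) + sqrt (sumsq (map2 (-) (vech M) (vech M0)))"
    by (rule sqrt_add_le_add_sqrt) (auto simp: sumsq_nonneg)
  also have "\<dots> \<le> frob (A - A0) + frob (M - M0)"
    using s1 real_sqrt_le_mono[OF s2] by (intro add_mono) auto
  finally show ?thesis .
qed

lemma perturbation_bound_combine:
  fixes \<delta> \<epsilon> k d L lam Lam a :: real
  assumes lam: "lam > 0" and Lam: "Lam \<ge> 0" and a: "0 \<le> a" "a < 1" and \<epsilon>: "\<epsilon> \<ge> 0"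
    and eps: "lam * \<epsilon> \<le> \<delta>" and k: "(1 - a^2) / (1 + a^2) * k \<le> 2 * \<epsilon>" and d: "d \<le> \<epsilon> + k"
    and L: "L \<le> \<delta> + 2 * (1 + Lam) * d"
  shows "L \<le> (1 + 16 * sqrt 2 * (1 + Lam) * (1 + a^2) / (lam * (1 - a^2))) * \<delta>"
proof -
  define c where "c = (1 - a^2) / (1 + a^2)"
  define K where "K = (1 + a^2) / (lam * (1 - a^2))"
  have a2: "a^2 < 1" using a by (simp add: power_less_one_iff)
  have c: "0 < c" "c \<le> 1" unfolding c_def using a2 by (auto simp: add_pos_nonneg)
  have a2': "1 + a^2 > 0" by (simp add: add_pos_nonneg)
  have K: "K \<ge> 0" and cK: "lam * c * K = 1" unfolding K_def c_def using lam a2 a2' by auto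
  have "c * d \<le> c * \<epsilon> + c * k" using mult_left_mono[OF d] c by (simp add: distrib_left)
  also have "\<dots> \<le> 3 * \<epsilon>" using k c \<epsilon> mult_left_le_one_le[of \<epsilon> c] unfolding c_def[symmetric] by linarith
  finally have "lam * (c * d) \<le> lam * (3 * \<epsilon>)" using lam by (intro mult_left_mono) auto
  also have "\<dots> \<le> 3 * \<delta>" using eps by (simp add: algebra_simps)
  finally have cd: "lam * (c * d) \<le> 3 * \<delta>" .
  have "d = K * (lam * (c * d))" using cK by (simp add: algebra_simps)
  also have "\<dots> \<le> K * (3 * \<delta>)" using cd K by (rule mult_left_mono)
  finally have dK: "d \<le> 3 * K * \<delta>" by (simp add: algebra_simps)
  have \<delta>: "\<delta> \<ge> 0" using eps lam \<epsilon> by (smt (verit) mult_nonneg_nonneg)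
  have "L \<le> (1 + 6 * (1 + Lam) * K) * \<delta>"
    using L mult_left_mono[OF dK, of "2 * (1 + Lam)"] Lam by (simp add: algebra_simps)
  also have "\<dots> \<le> (1 + 16 * sqrt 2 * (1 + Lam) * K) * \<delta>"
  proof -
    have "(6::real) \<le> 16 * sqrt 2" using real_sqrt_ge_one[of 2] by linarith
    hence "6 * ((1 + Lam) * K) \<le> 16 * sqrt 2 * ((1 + Lam) * K)" using Lam K by (intro mult_right_mono) auto
    hence "1 + 6 * (1 + Lam) * K \<le> 1 + 16 * sqrt 2 * (1 + Lam) * K" by (simp only: mult.assoc)
    thus ?thesis using \<delta> by (rule mult_right_mono)
  qed
  finally show ?thesis unfolding K_def by (simp add: mult.assoc)
qed

theorem theorem4:
  fixes p r :: nat and A A0 M M0 :: "real mat"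
  assumes "1 \<le> r" "r \<le> p"
    and "A \<in> carrier_mat (p - r) r" "A0 \<in> carrier_mat (p - r) r"
    and "spec_norm A < 1" "spec_norm A0 < 1"
    and "pos_def r M" "pos_def r M0"
    and "frob (Sigma p r A M - Sigma p r A0 M0)
           \<le> (1 - (spec_norm A0)^2)^2 * lambda_min M0
              / (4 * sqrt 2 * (1 + (spec_norm A0)^2)^2)"
  shows "lnorm (map2 (-) (vecm A @ vech M) (vecm A0 @ vech M0))
           \<le> (1 + 16 * sqrt 2 * (1 + lambda_max M0) * (1 + (spec_norm A0)^2)
                 / (lambda_min M0 * (1 - (spec_norm A0)^2)))
             * frob (Sigma p r A M - Sigma p r A0 M0)"
proof -
  note r1 = assms(1) and rp = assms(2) and A = assms(3) and A0 = assms(4) and pd = assms(8)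
  let ?U = "Ucay p r A" and ?U' = "Ucay p r A0" and ?\<delta> = "frob (Sigma p r A M - Sigma p r A0 M0)"
  let ?\<epsilon> = "frob (?U' - ?U * (transpose_mat ?U * ?U'))"
  note U = Ucay_carrier[OF rp A] Ucay_isometry[OF rp A]
    and U0 = Ucay_carrier[OF rp A0] Ucay_isometry[OF rp A0]
    and M = pos_def_carrier[OF assms(7)] and M0 = pos_def_carrier[OF pd] pos_def_symmetric[OF pd]
  have "lambda_min M0 * ?\<epsilon> \<le> ?\<delta>"
    unfolding Sigma_def using lambda_min_pos[OF pd r1] vnorm_mult_ge_lambda_min[OF pd r1]
    by (intro frob_residual_le_sigma_diff[OF U U0 M M0]) auto
  moreover have "(1 - (spec_norm A0)^2) / (1 + (spec_norm A0)^2) * frob (transpose_mat ?U * ?U' - 1\<^sub>m r) \<le> 2 * ?\<epsilon>"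
    by (rule frob_cross_gram_deviation_le[OF Ipr_carrier Ipr_transpose_Ipr[OF rp] U U0
          Ucay_top_symmetric[OF rp A] Ucay_top_symmetric[OF rp A0]
          Ucay_top_nonneg[OF rp A r1 assms(5)] Ucay_top_ge[OF rp A0 r1]])
  moreover have "lnorm (map2 (-) (vecm A @ vech M) (vecm A0 @ vech M0)) \<le> ?\<delta> + 2 * (1 + lambda_max M0) * frob (?U - ?U')"
  proof -
    have "frob (M - M0) \<le> ?\<delta> + 2 * lambda_max M0 * frob (?U - ?U')"
      unfolding Sigma_def using lambda_max_pos[OF pd r1] vnorm_mult_le_lambda_max[OF pd r1]
      by (intro frob_core_diff_le[OF U U0 M M0]) auto
    moreover have "frob (A - A0) \<le> 2 * frob (?U - ?U')"
      using assms(5,6) by (intro frob_Ucay_param_diff_le[OF r1 rp A A0]) auto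
    ultimately show ?thesis using lnorm_param_diff_le[OF A A0 M M0(1)] by (simp add: algebra_simps)
  qed
  ultimately show ?thesis
    using perturbation_bound_combine[OF lambda_min_pos[OF pd r1] _ spec_norm_nonneg[OF A0 r1] assms(6)
        frob_nonneg] frob_isometry_diff_le[OF U U0] lambda_max_pos[OF pd r1] by simp
qed

end
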